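(* Let $(\mathfrak g,d,[\,,\,])$ be a differential graded Lie algebra and $\eta:\mathfrak g\to\mathfrak g[-1]$ any linear map. Let $(\mathfrak g,\mu_* )$ be the $L_\infty$-algebra given by $\mu_1=d$, $\mu_2(v_1,v_2)=(d\eta+\eta d)[v_1,v_2]$ and, for $n\ge3$, $\mu_n(v_1,\dots,v_n)=(-1)^n\sum_{\sigma\in Sh(n-1,n)}(-1)^{\tilde\sigma}e(\sigma)\,\eta[\mu_{n-1}(v_{\sigma(1)},\dots,v_{\sigma(n-1)}),v_{\sigma(n)}]$. Then the Kuranishi map $K$ with components $$K_1(v_1)=v_1,\qquad K_2(v_1,v_2)=\eta[v_1,v_2],\qquad K_n=0\ \ (n\ge3)$$ is an $L_\infty$-isomorphism from $(\mathfrak g,\mu_* )$ to the differential abelian Lie algebra $(\mathfrak g,d,0)$.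
   Context: For a $\mathbb Z$-graded vector space $\mathfrak g$, $\mathfrak g[n]$ is the shift with $(\mathfrak g[n])^i=\mathfrak g^{i+n}$; $\tilde v$ is the parity of the degree of homogeneous $v$. $Sh(k,n)$ is the set of permutations $\sigma$ of $\{1,\dots,n\}$ with $\sigma(1)<\dots<\sigma(k)$ and $\sigma(k+1)<\dots<\sigma(n)$; $\tilde\sigma$ is its parity and the Koszul sign $e(\sigma)$ is defined by $v_{\sigma(1)}\wedge\dots\wedge v_{\sigma(n)}=(-1)^{\tilde\sigma}e(\sigma)v_1\wedge\dots\wedge v_n$. An $L_\infty$-algebra is a graded space with maps $\mu_k:\Lambda^k\mathfrak g\to\mathfrak g[2-k]$ satisfying, for all $n\ge1$, $\sum_{k+l=n+1}\sum_{\sigma\in Sh(k,n)}(-1)^{\tilde\sigma+k(l-1)}e(\sigma)\mu_l(\mu_k(v_{\sigma(1)},\dots,v_{\sigma(k)}),v_{\sigma(k+1)},\dots,v_{\sigma(n)})=0$. A differential abelian Lie algebra $(\mathfrak g',d',0)$ is the $L_\infty$-algebra with $\mu'_1=d'$ and $\mu'_n=0$ for $n\ge2$. An $L_\infty$-morphism from an $L_\infty$-algebra $(\mathfrak g,\mu_* )$ to a differential abelian Lie algebra $(\mathfrak g',d',0)$ is a family of linear maps $F_n:\Lambda^n\mathfrak g\to\mathfrak g'[1-n]$, $n\ge1$, such that for all $n\ge1$ and all $v_1,\dots,v_n$, $$d'F_n(v_1,\dots,v_n)=\sum_{k+l=n+1}\sum_{\sigma\in Sh(k,n)}(-1)^{\tilde\sigma+k(l-1)}e(\sigma)\,F_l\big(\mu_k(v_{\sigma(1)},\dots,v_{\sigma(k)}),v_{\sigma(k+1)},\dots,v_{\sigma(n)}\big).$$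 It is an $L_\infty$-isomorphism if $F_1:\mathfrak g\to\mathfrak g'$ is an isomorphism of graded vector spaces. *)

theory Defs
  imports Complex_Main "HOL-Combinatorics.Permutations"
begin

text \<open>A graded vector space over a field 'k (char 0) is the whole type 'v
 with a family of subspaces V i (i :: int) forming a direct sum decomposition.
 Multilinear maps on Lambda^n g are represented by their values on homogeneous
 arguments: f ks vs, where vs is the list of arguments (arity = length vs)
 and ks the list of their degrees (vs!j in V (ks!j)). Indices are 0-based.\<close>

definition graded_vs :: "('k::field \<Rightarrow> 'v::ab_group_add \<Rightarrow> 'v) \<Rightarrow> (int \<Rightarrow> 'v set) \<Rightarrow> bool" where
  "graded_vs sc V \<longleftrightarrow> vector_space sc \<and> (\<forall>i. 0 \<in> V i \<and> (\<forall>x\<in>V i. \<forall>y\<in>V i. x + y \<in> V i) \<and> (\<forall>c. \<forall>x\<in>V i. sc c x \<in> V i))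
     \<and> (\<forall>v. \<exists>I x. finite I \<and> (\<forall>i\<in>I. x i \<in> V i) \<and> v = sum x I)
     \<and> (\<forall>I x. finite I \<longrightarrow> (\<forall>i\<in>I. x i \<in> V i) \<longrightarrow> sum x I = 0 \<longrightarrow> (\<forall>i\<in>I. x i = 0))"

text \<open>Linear map of degree r (i.e. a linear map g -> g[r]).\<close>
definition graded_lin :: "('k::field \<Rightarrow> 'v::ab_group_add \<Rightarrow> 'v) \<Rightarrow> (int \<Rightarrow> 'v set) \<Rightarrow> int \<Rightarrow> ('v \<Rightarrow> 'v) \<Rightarrow> bool" where
  "graded_lin sc V r f \<longleftrightarrow> Vector_Spaces.linear sc sc f \<and> (\<forall>i v. v \<in> V i \<longrightarrow> f v \<in> V (i + r))"

definition ksign :: "int \<Rightarrow> int \<Rightarrow> int" where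
  "ksign a b = (if odd a \<and> odd b then -1 else 1)"

definition DGLA :: "('k::field \<Rightarrow> 'v::ab_group_add \<Rightarrow> 'v) \<Rightarrow> (int \<Rightarrow> 'v set) \<Rightarrow> ('v \<Rightarrow> 'v) \<Rightarrow> ('v \<Rightarrow> 'v \<Rightarrow> 'v) \<Rightarrow> bool" where
  "DGLA sc V d br \<longleftrightarrow> graded_vs sc V \<and> graded_lin sc V 1 d \<and> (\<forall>v. d (d v) = 0)
     \<and> (\<forall>x. Vector_Spaces.linear sc sc (br x)) \<and> (\<forall>y. Vector_Spaces.linear sc sc (\<lambda>x. br x y))
     \<and> (\<forall>i j x y. x \<in> V i \<longrightarrow> y \<in> V j \<longrightarrow> br x y \<in> V (i + j))
     \<and> (\<forall>i j x y. x \<in> V i \<longrightarrow> y \<in> V j \<longrightarrow> br x y = - sc (of_int (ksign i j)) (br y x))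
     \<and> (\<forall>i j k x y z. x \<in> V i \<longrightarrow> y \<in> V j \<longrightarrow> z \<in> V k \<longrightarrow>
           br x (br y z) = br (br x y) z + sc (of_int (ksign i j)) (br y (br x z)))
     \<and> (\<forall>i x y. x \<in> V i \<longrightarrow> d (br x y) = br (d x) y + sc (of_int ((-1) ^ nat \<bar>i\<bar>)) (br x (d y)))"

text \<open>(k,n)-unshuffles Sh(k,n), as permutations of {0..<n}.\<close>
definition shuffles :: "nat \<Rightarrow> nat \<Rightarrow> (nat \<Rightarrow> nat) set" where
  "shuffles k n = {\<sigma>. \<sigma> permutes {..<n} \<and> (\<forall>i j. i < j \<and> j < k \<longrightarrow> \<sigma> i < \<sigma> j)
                         \<and> (\<forall>i j. k \<le> i \<and> i < j \<and> j < n \<longrightarrow> \<sigma> i < \<sigma> j)}"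

definition koszul :: "int list \<Rightarrow> (nat \<Rightarrow> nat) \<Rightarrow> int" where
  "koszul ks \<sigma> = (\<Prod>(i,j)\<in>{(i,j). i < j \<and> j < length ks \<and> \<sigma> j < \<sigma> i}. ksign (ks ! \<sigma> i) (ks ! \<sigma> j))"

definition psub :: "'a list \<Rightarrow> (nat \<Rightarrow> nat) \<Rightarrow> nat \<Rightarrow> nat \<Rightarrow> 'a list" where
  "psub xs \<sigma> a b = map (\<lambda>i. xs ! \<sigma> i) [a..<b]"

primrec kmu :: "('k::field \<Rightarrow> 'v::ab_group_add \<Rightarrow> 'v) \<Rightarrow> ('v \<Rightarrow> 'v) \<Rightarrow> ('v \<Rightarrow> 'v \<Rightarrow> 'v) \<Rightarrow> ('v \<Rightarrow> 'v)
                 \<Rightarrow> nat \<Rightarrow> int list \<Rightarrow> 'v list \<Rightarrow> 'v" where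
  "kmu sc d br eta 0 ks vs = 0"
| "kmu sc d br eta (Suc m) ks vs =
     (if m = 0 then d (vs ! 0)
      else if m = 1 then d (eta (br (vs ! 0) (vs ! 1))) + eta (d (br (vs ! 0) (vs ! 1)))
      else sc (of_int ((-1) ^ Suc m))
             (\<Sum>\<sigma>\<in>shuffles m (Suc m).
                sc (of_int (sign \<sigma> * koszul ks \<sigma>))
                   (eta (br (kmu sc d br eta m (psub ks \<sigma> 0 m) (psub vs \<sigma> 0 m)) (vs ! \<sigma> m)))))"

definition kur_mu where
  "kur_mu sc d br eta = (\<lambda>ks vs. kmu sc d br eta (length vs) ks vs)"

definition kuranishi :: "('v \<Rightarrow> 'v \<Rightarrow> 'v) \<Rightarrow> ('v \<Rightarrow> 'v) \<Rightarrow> int list \<Rightarrow> 'v::ab_group_add list \<Rightarrow> 'v" where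
  "kuranishi br eta ks vs = (if length vs = 1 then vs ! 0
      else if length vs = 2 then eta (br (vs ! 0) (vs ! 1)) else 0)"

definition dab :: "('v \<Rightarrow> 'v) \<Rightarrow> int list \<Rightarrow> 'v::ab_group_add list \<Rightarrow> 'v" where
  "dab d ks vs = (if length vs = 1 then d (vs ! 0) else 0)"

definition homog :: "(int \<Rightarrow> 'v set) \<Rightarrow> int list \<Rightarrow> 'v list \<Rightarrow> bool" where
  "homog V ks vs \<longleftrightarrow> length ks = length vs \<and> (\<forall>j < length vs. vs ! j \<in> V (ks ! j))"

definition swapadj :: "'a list \<Rightarrow> nat \<Rightarrow> 'a list" where
  "swapadj xs j = xs[j := xs ! Suc j, Suc j := xs ! j]"

definition graded_multilin :: "('k::field \<Rightarrow> 'v::ab_group_add \<Rightarrow> 'v) \<Rightarrow> (int \<Rightarrow> 'v set) \<Rightarrow> (int \<Rightarrow> 'v set)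
     \<Rightarrow> (nat \<Rightarrow> int) \<Rightarrow> (int list \<Rightarrow> 'v list \<Rightarrow> 'v) \<Rightarrow> bool" where
  "graded_multilin sc V W r f \<longleftrightarrow> (\<forall>ks vs. homog V ks vs \<and> 1 \<le> length vs \<longrightarrow>
       f ks vs \<in> W (sum_list ks + r (length vs))
     \<and> (\<forall>j < length vs. \<forall>x \<in> V (ks ! j). \<forall>y \<in> V (ks ! j).
          f ks (vs[j := x + y]) = f ks (vs[j := x]) + f ks (vs[j := y]))
     \<and> (\<forall>j < length vs. \<forall>c. \<forall>x \<in> V (ks ! j).
          f ks (vs[j := sc c x]) = sc c (f ks (vs[j := x])))
     \<and> (\<forall>j. Suc j < length vs \<longrightarrow>
          f (swapadj ks j) (swapadj vs j) = - sc (of_int (ksign (ks ! j) (ks ! Suc j))) (f ks vs)))"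

text \<open>The general shape of the sums in the L-infinity relations: for an outer map G
 and inner brackets mu,
 sum_{k+l=n+1} sum_{sigma in Sh(k,n)} (-1)^(sigma~ + k(l-1)) e(sigma)
    G_l(mu_k(v_sigma(1..k)), v_sigma(k+1..n)).\<close>
definition linf_sum :: "('k::field \<Rightarrow> 'v::ab_group_add \<Rightarrow> 'v) \<Rightarrow> (int list \<Rightarrow> 'v list \<Rightarrow> 'v)
     \<Rightarrow> (int list \<Rightarrow> 'v list \<Rightarrow> 'v) \<Rightarrow> int list \<Rightarrow> 'v list \<Rightarrow> 'v" where
  "linf_sum sc G mu ks vs = (let n = length vs in
     (\<Sum>k\<in>{1..n}. \<Sum>\<sigma>\<in>shuffles k n.
        sc (of_int (sign \<sigma> * (-1) ^ (k * (n - k)) * koszul ks \<sigma>))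
          (G ((sum_list (psub ks \<sigma> 0 k) + 2 - int k) # psub ks \<sigma> k n)
             (mu (psub ks \<sigma> 0 k) (psub vs \<sigma> 0 k) # psub vs \<sigma> k n))))"

definition Linf_algebra :: "('k::field \<Rightarrow> 'v::ab_group_add \<Rightarrow> 'v) \<Rightarrow> (int \<Rightarrow> 'v set)
     \<Rightarrow> (int list \<Rightarrow> 'v list \<Rightarrow> 'v) \<Rightarrow> bool" where
  "Linf_algebra sc V mu \<longleftrightarrow> graded_vs sc V
     \<and> graded_multilin sc V V (\<lambda>k. 2 - int k) mu
     \<and> (\<forall>ks vs. homog V ks vs \<and> 1 \<le> length vs \<longrightarrow> linf_sum sc mu mu ks vs = 0)"

definition Linf_morphism_dab :: "('k::field \<Rightarrow> 'v::ab_group_add \<Rightarrow> 'v) \<Rightarrow> (int \<Rightarrow> 'v set)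
     \<Rightarrow> (int list \<Rightarrow> 'v list \<Rightarrow> 'v) \<Rightarrow> (int \<Rightarrow> 'v set) \<Rightarrow> ('v \<Rightarrow> 'v)
     \<Rightarrow> (int list \<Rightarrow> 'v list \<Rightarrow> 'v) \<Rightarrow> bool" where
  "Linf_morphism_dab sc V mu W d' F \<longleftrightarrow> Linf_algebra sc V mu \<and> Linf_algebra sc W (dab d')
     \<and> graded_multilin sc V W (\<lambda>n. 1 - int n) F
     \<and> (\<forall>ks vs. homog V ks vs \<and> 1 \<le> length vs \<longrightarrow> d' (F ks vs) = linf_sum sc F mu ks vs)"

definition Linf_iso_dab :: "('k::field \<Rightarrow> 'v::ab_group_add \<Rightarrow> 'v) \<Rightarrow> (int \<Rightarrow> 'v set)
     \<Rightarrow> (int list \<Rightarrow> 'v list \<Rightarrow> 'v) \<Rightarrow> (int \<Rightarrow> 'v set) \<Rightarrow> ('v \<Rightarrow> 'v)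
     \<Rightarrow> (int list \<Rightarrow> 'v list \<Rightarrow> 'v) \<Rightarrow> bool" where
  "Linf_iso_dab sc V mu W d' F \<longleftrightarrow> Linf_morphism_dab sc V mu W d' F
     \<and> (\<forall>i. bij_betw (\<lambda>v. F [i] [v]) (V i) (W i))"

end

theory Submission
  imports Defs
begin

(* Write R_n(v) = sum_t +-eta[mu_(n-1)(v with v_t omitted), v_t] (eta_removal_sum). For n >= 3
   the recursive definition says mu_n = (-1)^n R_n, and for n = 2 the Leibniz rule and graded
   antisymmetry give eta d[v_1,v_2] = R_2. Hence for every n >= 2

     mu_n = [n = 2] d eta[v_1,v_2] + (-1)^n R_n.                                   (kmu_decompose)

   The morphism equation d K_n = mu_n + sum +-K_2(mu_(n-1)(...), v_t) is this identity, because the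
   K_2-terms add up to (-1)^(n-1) R_n.

   The L-infinity relations J_n = 0 are proved by induction on n. The summand of J_n with k = n is
   d mu_n. In each other summand mu_(n-k+1)(mu_k(v_S), v_T) the outer bracket is expanded by the
   identity: the boundary parts survive only for k = n-1 and add up to d((-1)^(n-1) R_n) = -d mu_n;
   the part in which mu_k(v_S) is the omitted argument is +-eta[mu_(n-k)(v_T), mu_k(v_S)] and cancels
   against the summand of the complementary subset by graded antisymmetry; the parts in which some
   v_t is omitted regroup by t into +-eta[J_(n-1)(v with v_t omitted), v_t] = 0.

   All signs are parities of integer exponents, and (k,n)-unshuffles are identified with the
   k-subsets of {0..<n} that they map {0..<k} onto. *)

section \<open>Signs of permutations\<close>

definition neg_one_pow :: "int \<Rightarrow> int" where "neg_one_pow z = (if even z then 1 else -1)"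

lemma neg_one_pow_add: "neg_one_pow (a+b) = neg_one_pow a * neg_one_pow b"
  by (auto simp: neg_one_pow_def)

lemma neg_one_pow_0[simp]: "neg_one_pow 0 = 1" by (simp add: neg_one_pow_def)
lemma neg_one_pow_1[simp]: "neg_one_pow 1 = -1" by (simp add: neg_one_pow_def)

lemma ksign_eq_neg_one_pow: "ksign a b = neg_one_pow (a*b)"
  by (auto simp: ksign_def neg_one_pow_def)

lemma power_minus_one_eq: "(-1::int)^n = neg_one_pow (int n)"
  by (induction n) (auto simp: neg_one_pow_def)

lemma prod_neg_one_pow: "(\<Prod>x\<in>A. neg_one_pow (f x)) = neg_one_pow (\<Sum>x\<in>A. f x)"
proof (cases "finite A")
  case True then show ?thesis
    by (induction A rule: finite_induct) (auto simp: neg_one_pow_add)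
qed simp

definition inversions :: "(nat \<Rightarrow> nat) \<Rightarrow> nat \<Rightarrow> (nat \<times> nat) set" where
  "inversions p n = {(i,j). i<j \<and> j<n \<and> p j < p i}"

lemma finite_inversions[simp]: "finite (inversions p n)"
  by (rule finite_subset[of _ "{..<n} \<times> {..<n}"]) (auto simp: inversions_def)

lemma no_inversions_imp_id:
  assumes p: "p permutes {..<n}" and e: "inversions p n = {}"
  shows "p = id"
proof -
  have inj: "inj_on p {..<n}" using p by (meson permutes_inj_on)
  have lt: "p i < p j" if "i < j" "j < n" for i j
  proof -
    have "p i \<noteq> p j" using inj that by (auto simp: inj_on_def)
    moreover have "\<not> p j < p i" using e that by (auto simp: inversions_def)
    ultimately show ?thesis by simp
  qed
  have "sorted_wrt (<) (map p [0..<n])"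
    by (auto simp: sorted_wrt_iff_nth_less intro!: lt)
  moreover have "set (map p [0..<n]) = {..<n}"
    using permutes_image[OF p] by (auto simp: atLeast0LessThan)
  ultimately have "sorted_list_of_set {..<n} = map p [0..<n]"
    by (subst sorted_list_of_set_unique[symmetric]) auto
  hence "map p [0..<n] = [0..<n]" by (simp add: lessThan_atLeast0)
  hence "p i = i" if "i < n" for i using that
    by (metis add_0 diff_zero length_upt nth_map nth_upt)
  moreover have "p i = i" if "\<not> i < n" for i using p that by (simp add: permutes_not_in)
  ultimately show ?thesis by (auto simp: fun_eq_iff)
qed

lemma inversions_imp_adjacent_descent:
  assumes "inversions p n \<noteq> {}"
  shows "\<exists>a. Suc a < n \<and> p (Suc a) < p a"
proof (rule ccontr)
  assume "\<not> ?thesis"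
  hence "sorted (map p [0..<n])"
    unfolding sorted_iff_nth_Suc by (auto simp: not_less) (metis Suc_lessD leD nat_less_le)
  hence "p i \<le> p j" if "i \<le> j" "j < n" for i j
    using that by (auto simp: sorted_iff_nth_mono)
  thus False using assms by (auto simp: inversions_def) (meson leD less_imp_le)
qed

lemma inversions_transpose_descent:
  assumes a: "Suc a < n" "p (Suc a) < p a"
  defines "\<tau> \<equiv> Transposition.transpose a (Suc a)"
  shows "card (inversions (p \<circ> \<tau>) n) = card (inversions p n) - 1"
    and "(a, Suc a) \<in> inversions p n"
proof -
  show A: "(a, Suc a) \<in> inversions p n" using a by (auto simp: inversions_def)
  define f where "f = (\<lambda>(i::nat,j::nat). (\<tau> i, \<tau> j))"
  have ord: "\<tau> i < \<tau> j" if "i < j" "(i,j) \<noteq> (a, Suc a)" for i j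
    using that unfolding \<tau>_def transpose_def by auto
  have rng: "\<tau> j < n" if "j < n" for j using that a unfolding \<tau>_def transpose_def by auto
  have ff: "f (f x) = x" for x by (cases x) (simp add: f_def \<tau>_def)
  have 1: "f x \<in> inversions p n - {(a, Suc a)}" if "x \<in> inversions (p \<circ> \<tau>) n" for x
  proof -
    obtain i j where x: "x = (i,j)" by (cases x)
    have ij: "i < j" "j < n" "p (\<tau> j) < p (\<tau> i)" using that x by (auto simp: inversions_def)
    have ne: "(i,j) \<noteq> (a, Suc a)" using ij a by (auto simp: \<tau>_def)
    have "(\<tau> i, \<tau> j) \<noteq> (a, Suc a)"
    proof
      assume "(\<tau> i, \<tau> j) = (a, Suc a)"
      hence "i = Suc a" "j = a" unfolding \<tau>_def transpose_def by (auto split: if_splits)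
      with ij show False by simp
    qed
    thus ?thesis using ij ord[OF ij(1) ne] rng[OF ij(2)] by (simp add: x f_def inversions_def)
  qed
  have 2: "f x \<in> inversions (p \<circ> \<tau>) n" if "x \<in> inversions p n - {(a, Suc a)}" for x
  proof -
    obtain i j where x: "x = (i,j)" by (cases x)
    have ij: "i < j" "j < n" "p j < p i" "(i,j) \<noteq> (a, Suc a)" using that x by (auto simp: inversions_def)
    have "\<tau> (\<tau> i) = i" "\<tau> (\<tau> j) = j" by (simp_all add: \<tau>_def)
    thus ?thesis using ij ord[OF ij(1) ij(4)] rng[OF ij(2)] by (simp add: x f_def inversions_def)
  qed
  have "bij_betw f (inversions (p \<circ> \<tau>) n) (inversions p n - {(a, Suc a)})"
    by (rule bij_betw_byWitness[where f'=f]) (use 1 2 ff in \<open>auto intro!: image_subsetI\<close>)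
  hence "card (inversions (p \<circ> \<tau>) n) = card (inversions p n - {(a, Suc a)})"
    by (rule bij_betw_same_card)
  also have "\<dots> = card (inversions p n) - 1" using A by simp
  finally show "card (inversions (p \<circ> \<tau>) n) = card (inversions p n) - 1" .
qed

lemma sign_eq_neg_one_pow_inversions:
  assumes "p permutes {..<n}"
  shows "sign p = neg_one_pow (int (card (inversions p n)))"
  using assms
proof (induction "card (inversions p n)" arbitrary: p)
  case 0
  hence "inversions p n = {}" by simp
  hence "p = id" using no_inversions_imp_id[OF 0(2)] by blast
  thus ?case using 0 by simp
next
  case (Suc c)
  hence "inversions p n \<noteq> {}" by auto
  then obtain a where a: "Suc a < n" "p (Suc a) < p a" using inversions_imp_adjacent_descent by blast
  define \<tau> where "\<tau> = Transposition.transpose a (Suc a)"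
  have tp: "\<tau> permutes {..<n}" using a by (simp add: \<tau>_def permutes_swap_id)
  have q: "(p \<circ> \<tau>) permutes {..<n}" using Suc.prems tp by (simp add: permutes_compose)
  have c: "card (inversions (p \<circ> \<tau>) n) = c" using inversions_transpose_descent[OF a] Suc.hyps(2) by (simp add: \<tau>_def)
  have IH: "sign (p \<circ> \<tau>) = neg_one_pow (int c)" using Suc.hyps(1)[OF c[symmetric] q] c by simp
  have "sign (p \<circ> \<tau>) = sign p * sign \<tau>"
    by (rule sign_compose) (use Suc.prems tp in \<open>auto intro: permutes_imp_permutation\<close>)
  also have "sign \<tau> = -1" by (simp add: \<tau>_def sign_swap_id)
  finally have "sign (p \<circ> \<tau>) = - sign p" by (simp add: o_def)
  hence "sign p = - neg_one_pow (int c)" using IH by simp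
  thus ?case using Suc.hyps(2)[symmetric] by (simp add: neg_one_pow_def)
qed


definition signed :: "int \<Rightarrow> 'v::ab_group_add \<Rightarrow> 'v" where
  "signed z x = (if even z then x else - x)"

lemma signed_add: "signed (a+b) x = signed a (signed b x)" by (auto simp: signed_def)
lemma signed_cong: "even (a-b) \<Longrightarrow> signed a x = signed b x"
  by (auto simp: signed_def)
lemma signed_0[simp]: "signed 0 x = x" by (simp add: signed_def)
lemma signed_1[simp]: "signed 1 x = - x" by (simp add: signed_def)
lemma signed_plus: "signed z (x+y) = signed z x + signed z y" by (simp add: signed_def)
lemma signed_zero[simp]: "signed z 0 = 0" by (simp add: signed_def)
lemma signed_signed: "signed a (signed b x) = signed (a+b) x" by (simp add: signed_add)
lemma signed_sum: "signed z (sum f A) = (\<Sum>i\<in>A. signed z (f i))"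
  by (simp add: signed_def sum_negf)
lemma signed_eq_minus_signed_succ: "signed z x = - signed (z + 1) x" by (simp add: signed_def)
lemma odd_fun_signed: "(\<And>y. f (- y) = - f y) \<Longrightarrow> f (signed z x) = signed z (f x)"
  by (simp add: signed_def)

lemma scale_neg_one_pow: "vector_space sc \<Longrightarrow> sc (of_int (neg_one_pow z)) x = signed z x"
  using module.scale_minus_left[of sc] module.scale_one[of sc] module_iff_vector_space[of sc]
  by (simp add: neg_one_pow_def signed_def)
lemma signed_opposite_cancel: "odd (a - b) \<Longrightarrow> signed a z + signed b z = (0 :: 'v :: ab_group_add)"
  by (auto simp: signed_def)
lemma signed_diff: "signed z (x - y) = signed z x - signed z y" by (simp add: signed_def)

lemma eq_neg_self_imp_zero:
  fixes x :: "'v :: ab_group_add" and sc :: "'k::field_char_0 \<Rightarrow> 'v \<Rightarrow> 'v"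
  assumes vector_space_sc: "vector_space sc" and e: "x = - x"
  shows "x = 0"
proof -
  have m: "module sc" using vector_space_sc by (simp add: module_iff_vector_space)
  have "x + x = 0" using e by (metis add.right_inverse)
  hence "sc (1/2) (x + x) = 0" by (simp add: module.scale_zero_right[OF m])
  hence "sc (1/2) x + sc (1/2) x = 0" by (simp add: module.scale_right_distrib[OF m])
  moreover have "sc (1/2 + 1/2) x = sc (1/2) x + sc (1/2) x" by (rule module.scale_left_distrib[OF m])
  moreover have "(1/2 + 1/2 :: 'k) = 1" by simp
  ultimately show ?thesis using module.scale_one[OF m, of x] by simp
qed

section \<open>Unshuffles as subsets\<close>

definition k_subsets :: "nat \<Rightarrow> nat \<Rightarrow> nat set set" where
  "k_subsets n k = {S. S \<subseteq> {..<n} \<and> card S = k}"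

definition sublist_at :: "'a list \<Rightarrow> nat set \<Rightarrow> 'a list" where
  "sublist_at xs S = map ((!) xs) (sorted_list_of_set S)"

(* (-1) ^ unshuffle_exp ks S is sign times Koszul sign of the unshuffle moving S to the front. *)
definition unshuffle_exp :: "int list \<Rightarrow> nat set \<Rightarrow> int" where
  "unshuffle_exp ks S = (\<Sum>(i,j)\<in>{(i,j). i<j \<and> j<length ks \<and> i\<notin>S \<and> j\<in>S}. 1 + ks!i * ks!j)"

definition unshuffle_of :: "nat \<Rightarrow> nat \<Rightarrow> nat set \<Rightarrow> nat \<Rightarrow> nat" where
  "unshuffle_of n k S i = (if i < k then sorted_list_of_set S ! i
      else if i < n then sorted_list_of_set ({..<n} - S) ! (i - k) else i)"

lemma shufflesD:
  assumes "\<sigma> \<in> shuffles k n"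
  shows "\<sigma> permutes {..<n}" "\<And>i j. i < j \<Longrightarrow> j < k \<Longrightarrow> \<sigma> i < \<sigma> j"
    "\<And>i j. k \<le> i \<Longrightarrow> i < j \<Longrightarrow> j < n \<Longrightarrow> \<sigma> i < \<sigma> j"
  using assms by (auto simp: shuffles_def)

lemma map_upt_eq_sorted_list_of_set_image:
  assumes "\<And>i j. a \<le> i \<Longrightarrow> i < j \<Longrightarrow> j < b \<Longrightarrow> f i < f j"
  shows "map f [a..<b] = sorted_list_of_set (f ` {a..<b})"
proof -
  have inj: "inj_on f {a..<b}"
    by (rule inj_onI) (metis assms atLeastLessThan_iff linorder_neqE_nat order.asym)
  have sw: "sorted_wrt (<) (map f [a..<b])"
    unfolding sorted_wrt_iff_nth_less by (auto intro!: assms)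
  have "sorted_list_of_set (f ` {a..<b}) = map f [a..<b]"
    by (subst sorted_list_of_set_unique[symmetric]) (use sw card_image[OF inj] in auto)
  thus ?thesis by simp
qed

lemma shuffle_sorted_lists:
  assumes s: "\<sigma> \<in> shuffles k n" and kn: "k \<le> n"
  shows "map \<sigma> [0..<k] = sorted_list_of_set (\<sigma>`{..<k})"
    and "map \<sigma> [k..<n] = sorted_list_of_set ({..<n} - \<sigma>`{..<k})"
proof -
  have p: "\<sigma> permutes {..<n}" by (rule shufflesD[OF s])
  have inj: "inj_on \<sigma> {..<n}" using p by (meson permutes_inj_on)
  have img: "\<sigma> ` {..<n} = {..<n}" using p by (rule permutes_image)
  show "map \<sigma> [0..<k] = sorted_list_of_set (\<sigma>`{..<k})"
    using map_upt_eq_sorted_list_of_set_image[of 0 k \<sigma>] shufflesD(2)[OF s] by (simp add: atLeast0LessThan)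
  have e: "{..<n} - \<sigma>`{..<k} = \<sigma> ` {k..<n}"
  proof -
    have u: "{..<n} = {..<k} \<union> {k..<n}" using kn by auto
    have "\<sigma>`{..<k} \<inter> \<sigma>`{k..<n} = {}"
    proof (rule ccontr)
      assume "\<sigma>`{..<k} \<inter> \<sigma>`{k..<n} \<noteq> {}"
      then obtain a b where ab: "a < k" "k \<le> b" "b < n" "\<sigma> a = \<sigma> b" by auto
      have "a = b" using inj_onD[OF inj ab(4)] ab kn by simp
      thus False using ab by simp
    qed
    moreover have "\<sigma>`{..<n} = \<sigma>`{..<k} \<union> \<sigma>`{k..<n}" using u by (metis image_Un)
    ultimately show ?thesis using img by auto
  qed
  show "map \<sigma> [k..<n] = sorted_list_of_set ({..<n} - \<sigma>`{..<k})"
    unfolding e using map_upt_eq_sorted_list_of_set_image[of k n \<sigma>] shufflesD(3)[OF s] by simp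
qed

lemma shuffle_eq_unshuffle_of:
  assumes s: "\<sigma> \<in> shuffles k n" and kn: "k \<le> n"
  shows "\<sigma> = unshuffle_of n k (\<sigma>`{..<k})"
proof
  fix i
  show "\<sigma> i = unshuffle_of n k (\<sigma>`{..<k}) i"
  proof (cases "i < k")
    case True
    thus ?thesis using arg_cong[OF shuffle_sorted_lists(1)[OF s kn], of "\<lambda>l. l ! i"]
      by (simp add: unshuffle_of_def)
  next
    case False
    show ?thesis
    proof (cases "i < n")
      case True
      thus ?thesis using False arg_cong[OF shuffle_sorted_lists(2)[OF s kn], of "\<lambda>l. l ! (i-k)"]
        by (simp add: unshuffle_of_def)
    next
      case F2: False
      thus ?thesis using False shufflesD(1)[OF s] by (simp add: unshuffle_of_def permutes_not_in)
    qed
  qed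
qed

lemma finite_of_mem_k_subsets: "S \<in> k_subsets n k \<Longrightarrow> finite S"
  by (auto simp: k_subsets_def intro: finite_subset)

lemma unshuffle_of_list:
  assumes S: "S \<in> k_subsets n k"
  shows "map (unshuffle_of n k S) [0..<n] = sorted_list_of_set S @ sorted_list_of_set ({..<n} - S)"
    and "k \<le> n"
proof -
  have f: "finite S" using S by (rule finite_of_mem_k_subsets)
  have c: "card S = k" "S \<subseteq> {..<n}" using S by (auto simp: k_subsets_def)
  show kn: "k \<le> n" using card_mono[OF _ c(2)] c by simp
  have c2: "card ({..<n} - S) = n - k" using c by (simp add: card_Diff_subset f)
  show "map (unshuffle_of n k S) [0..<n] = sorted_list_of_set S @ sorted_list_of_set ({..<n} - S)"
    by (rule nth_equalityI) (use c c2 kn in \<open>auto simp: unshuffle_of_def nth_append\<close>)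
qed

lemma unshuffle_of_shuffles:
  assumes S: "S \<in> k_subsets n k"
  shows "unshuffle_of n k S \<in> shuffles k n" and "unshuffle_of n k S ` {..<k} = S"
proof -
  have f: "finite S" using S by (rule finite_of_mem_k_subsets)
  have c: "card S = k" "S \<subseteq> {..<n}" using S by (auto simp: k_subsets_def)
  have kn: "k \<le> n" using unshuffle_of_list(2)[OF S] .
  define L where "L = sorted_list_of_set S @ sorted_list_of_set ({..<n} - S)"
  have dL: "distinct L" "set L = {..<n}" "length L = n"
    using f c kn by (auto simp: L_def card_Diff_subset)
  have eq: "unshuffle_of n k S i = L ! i" if "i < n" for i
    using arg_cong[OF unshuffle_of_list(1)[OF S], of "\<lambda>l. l ! i"] that by (simp add: L_def)
  have "bij_betw ((!) L) {..<n} {..<n}" by (rule bij_betw_nth) (use dL in auto)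
  hence "bij_betw (unshuffle_of n k S) {..<n} {..<n}"
    by (rule bij_betw_cong[THEN iffD1, rotated]) (simp add: eq)
  hence p: "unshuffle_of n k S permutes {..<n}"
    by (rule bij_imp_permutes) (use kn in \<open>simp add: unshuffle_of_def\<close>)
  have s1: "sorted_wrt (<) (sorted_list_of_set S)" by simp
  have s2: "sorted_wrt (<) (sorted_list_of_set ({..<n} - S))" by simp
  have l1: "length (sorted_list_of_set S) = k" using c by simp
  have l2: "length (sorted_list_of_set ({..<n} - S)) = n - k" using c f by (simp add: card_Diff_subset)
  show "unshuffle_of n k S \<in> shuffles k n"
    unfolding shuffles_def
  proof (intro CollectI conjI allI impI p)
    fix i j assume "i < j \<and> j < k"
    thus "unshuffle_of n k S i < unshuffle_of n k S j" using sorted_wrt_nth_less[OF s1, of i j] l1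
      by (simp add: unshuffle_of_def)
  next
    fix i j assume a: "k \<le> i \<and> i < j \<and> j < n"
    have "i - k < j - k" "j - k < n - k" using a by auto
    thus "unshuffle_of n k S i < unshuffle_of n k S j" using sorted_wrt_nth_less[OF s2, of "i-k" "j-k"] l2 a
      by (simp add: unshuffle_of_def)
  qed
  show "unshuffle_of n k S ` {..<k} = S"
  proof -
    have "unshuffle_of n k S ` {..<k} = (\<lambda>i. sorted_list_of_set S ! i) ` {..<length (sorted_list_of_set S)}"
      using l1 by (auto simp: unshuffle_of_def)
    also have "\<dots> = set (sorted_list_of_set S)" by (auto simp: set_conv_nth)
    finally show ?thesis using f by simp
  qed
qed

lemma bij_betw_unshuffle_of: "k \<le> n \<Longrightarrow> bij_betw (unshuffle_of n k) (k_subsets n k) (shuffles k n)"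
proof (rule bij_betw_imageI)
  assume kn: "k \<le> n"
  show "inj_on (unshuffle_of n k) (k_subsets n k)"
    by (rule inj_onI) (metis unshuffle_of_shuffles(2))
  show "unshuffle_of n k ` k_subsets n k = shuffles k n"
  proof (intro equalityI subsetI)
    fix \<sigma> assume "\<sigma> \<in> unshuffle_of n k ` k_subsets n k"
    thus "\<sigma> \<in> shuffles k n" using unshuffle_of_shuffles(1) by blast
  next
    fix \<sigma> assume s: "\<sigma> \<in> shuffles k n"
    have p: "\<sigma> permutes {..<n}" by (rule shufflesD[OF s])
    have inj: "inj_on \<sigma> {..<k}" using permutes_inj_on[OF p] kn by (auto intro: inj_on_subset)
    have "\<sigma>`{..<k} \<in> k_subsets n k"
      using permutes_image[OF p] kn card_image[OF inj] by (auto simp: k_subsets_def)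
    thus "\<sigma> \<in> unshuffle_of n k ` k_subsets n k" using shuffle_eq_unshuffle_of[OF s kn] by blast
  qed
qed

lemma sum_shuffles_eq_sum_k_subsets:
  "k \<le> n \<Longrightarrow> (\<Sum>\<sigma>\<in>shuffles k n. f \<sigma>) = (\<Sum>S\<in>k_subsets n k. f (unshuffle_of n k S))"
  by (rule sum.reindex_bij_betw[symmetric]) (rule bij_betw_unshuffle_of)

lemma psub_unshuffle_of:
  assumes S: "S \<in> k_subsets n k"
  shows "psub xs (unshuffle_of n k S) 0 k = sublist_at xs S"
    and "psub xs (unshuffle_of n k S) k n = sublist_at xs ({..<n} - S)"
proof -
  have kn: "k \<le> n" by (rule unshuffle_of_list(2)[OF S])
  have s: "unshuffle_of n k S \<in> shuffles k n" by (rule unshuffle_of_shuffles(1)[OF S])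
  note L = shuffle_sorted_lists[OF s kn, unfolded unshuffle_of_shuffles(2)[OF S]]
  show "psub xs (unshuffle_of n k S) 0 k = sublist_at xs S"
    using arg_cong[OF L(1), of "map ((!) xs)"] by (simp add: psub_def sublist_at_def o_def)
  show "psub xs (unshuffle_of n k S) k n = sublist_at xs ({..<n} - S)"
    using arg_cong[OF L(2), of "map ((!) xs)"] by (simp add: psub_def sublist_at_def o_def)
qed

lemma shuffle_inversion_crosses:
  assumes s: "\<sigma> \<in> shuffles k n" and ab: "(a, b) \<in> inversions \<sigma> n"
  shows "a < k" and "k \<le> b"
proof -
  have h: "a < b" "b < n" "\<sigma> b < \<sigma> a" using ab by (auto simp: inversions_def)
  show "a < k"
  proof (rule ccontr)
    assume "\<not> a < k" thus False using shufflesD(3)[OF s, of a b] h by simp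
  qed
  show "k \<le> b"
  proof (rule ccontr)
    assume "\<not> k \<le> b" thus False using shufflesD(2)[OF s, of a b] h by simp
  qed
qed

lemma bij_betw_shuffle_inversions:
  assumes s: "\<sigma> \<in> shuffles k n" and kn: "k \<le> n"
  shows "bij_betw (\<lambda>(a,b). (\<sigma> b, \<sigma> a)) (inversions \<sigma> n)
           {(i,j). i<j \<and> j<n \<and> i\<notin>\<sigma>`{..<k} \<and> j\<in>\<sigma>`{..<k}}"
proof -
  have p: "\<sigma> permutes {..<n}" by (rule shufflesD[OF s])
  have inj: "inj_on \<sigma> {..<n}" using p by (meson permutes_inj_on)
  have img: "\<sigma> ` {..<n} = {..<n}" using p by (rule permutes_image)
  define S where "S = \<sigma>`{..<k}"
  define P where "P = {(i,j). i<j \<and> j<n \<and> i\<notin>S \<and> j\<in>S}"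
  define g where "g = (\<lambda>(i,j). (inv_into {..<n} \<sigma> j, inv_into {..<n} \<sigma> i))"
  have 1: "(\<lambda>(a,b). (\<sigma> b, \<sigma> a)) x \<in> P \<and> g ((\<lambda>(a,b). (\<sigma> b, \<sigma> a)) x) = x"
    if x: "x \<in> inversions \<sigma> n" for x
  proof -
    obtain a b where ab: "x = (a,b)" by (cases x)
    have h: "a < b" "b < n" "\<sigma> b < \<sigma> a" using x ab by (auto simp: inversions_def)
    have ak: "a < k" and bk: "\<not> b < k"
      using shuffle_inversion_crosses[OF s x[unfolded ab]] by auto
    have "\<sigma> b \<notin> S"
    proof
      assume "\<sigma> b \<in> S"
      then obtain c where c: "c < k" "\<sigma> b = \<sigma> c" by (auto simp: S_def)
      have "b = c" using inj_onD[OF inj c(2)] c(1) h(2) kn by simp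
      thus False using bk c by simp
    qed
    moreover have "\<sigma> a \<in> S" using ak by (simp add: S_def)
    moreover have "\<sigma> a < n" using h img by auto
    moreover have "g (\<sigma> b, \<sigma> a) = (a, b)" using h inj by (simp add: g_def)
    ultimately show ?thesis using h ab by (simp add: P_def)
  qed
  have 2: "g y \<in> inversions \<sigma> n \<and> (\<lambda>(a,b). (\<sigma> b, \<sigma> a)) (g y) = y" if y: "y \<in> P" for y
  proof -
    obtain i j where ij: "y = (i,j)" by (cases y)
    have h: "i < j" "j < n" "i \<notin> S" "j \<in> S" using y ij by (auto simp: P_def)
    obtain a where a: "a < k" "\<sigma> a = j" using h by (auto simp: S_def)
    have "i \<in> \<sigma>`{..<n}" using h img by auto
    then obtain b where b: "b < n" "\<sigma> b = i" by auto
    have bk: "\<not> b < k" using b h by (auto simp: S_def)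
    have ia: "inv_into {..<n} \<sigma> j = a" "inv_into {..<n} \<sigma> i = b"
      using a b inj kn by (auto intro: inv_into_f_f)
    have "a < b" using a bk by simp
    thus ?thesis using ia a b h ij by (simp add: inversions_def g_def)
  qed
  have "bij_betw (\<lambda>(a,b). (\<sigma> b, \<sigma> a)) (inversions \<sigma> n) P"
    by (rule bij_betw_byWitness[where f'=g]) (use 1 2 in \<open>auto intro!: image_subsetI\<close>)
  thus ?thesis by (simp add: P_def S_def)
qed

lemma sign_koszul_shuffle:
  assumes s: "\<sigma> \<in> shuffles k n" and kn: "k \<le> n" and len: "length ks = n"
  shows "sign \<sigma> * koszul ks \<sigma> = neg_one_pow (unshuffle_exp ks (\<sigma>`{..<k}))"
proof -
  have p: "\<sigma> permutes {..<n}" by (rule shufflesD[OF s])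
  have kz: "koszul ks \<sigma> = neg_one_pow (\<Sum>(i,j)\<in>inversions \<sigma> n. ks ! \<sigma> i * ks ! \<sigma> j)"
    unfolding koszul_def ksign_eq_neg_one_pow inversions_def len
    by (subst prod_neg_one_pow[symmetric]) (simp add: case_prod_beta)
  have "sign \<sigma> * koszul ks \<sigma> = neg_one_pow (\<Sum>(i,j)\<in>inversions \<sigma> n. 1 + ks ! \<sigma> i * ks ! \<sigma> j)"
    unfolding sign_eq_neg_one_pow_inversions[OF p] kz neg_one_pow_add[symmetric]
    by (simp add: sum.distrib case_prod_beta)
  also have "(\<Sum>(i,j)\<in>inversions \<sigma> n. 1 + ks ! \<sigma> i * ks ! \<sigma> j)
     = (\<Sum>x\<in>inversions \<sigma> n. (\<lambda>(i,j). 1 + ks!i * ks!j) ((\<lambda>(a,b). (\<sigma> b, \<sigma> a)) x))"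
    by (rule sum.cong) (auto simp: mult.commute)
  also have "\<dots> = (\<Sum>(i,j)\<in>{(i,j). i<j \<and> j<n \<and> i\<notin>\<sigma>`{..<k} \<and> j\<in>\<sigma>`{..<k}}. 1 + ks!i * ks!j)"
    by (rule sum.reindex_bij_betw[OF bij_betw_shuffle_inversions[OF s kn]])
  finally show ?thesis by (simp add: unshuffle_exp_def len)
qed

lemma sign_koszul_unshuffle_of:
  assumes S: "S \<in> k_subsets n k" and len: "length ks = n"
  shows "sign (unshuffle_of n k S) * koszul ks (unshuffle_of n k S) = neg_one_pow (unshuffle_exp ks S)"
  using sign_koszul_shuffle[OF unshuffle_of_shuffles(1)[OF S] unshuffle_of_list(2)[OF S] len] unshuffle_of_shuffles(2)[OF S]
  by simp


lemma k_subsets_all: "k_subsets n n = {{..<n}}"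
proof (intro equalityI subsetI)
  fix S assume "S \<in> k_subsets n n"
  hence "S \<subseteq> {..<n}" "card S = card {..<n}" by (auto simp: k_subsets_def)
  hence "S = {..<n}" by (intro card_subset_eq) auto
  thus "S \<in> {{..<n}}" by simp
qed (auto simp: k_subsets_def)

lemma unshuffle_exp_all: "length ks = n \<Longrightarrow> unshuffle_exp ks {..<n} = 0"
  by (auto simp: unshuffle_exp_def intro!: sum.neutral)

section \<open>Index bookkeeping on lists\<close>

definition remove_nth :: "nat \<Rightarrow> 'a list \<Rightarrow> 'a list" where
  "remove_nth t xs = take t xs @ drop (Suc t) xs"

(* The sign exponent for moving entry t behind all later entries. *)
definition remove_exp :: "int list \<Rightarrow> nat \<Rightarrow> int" where
  "remove_exp ks t = (\<Sum>j\<in>{t<..<length ks}. 1 + ks!t * ks!j)"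

lemma length_remove_nth[simp]: "t < length xs \<Longrightarrow> length (remove_nth t xs) = length xs - 1"
  by (simp add: remove_nth_def)

lemma nth_remove_nth: "t < length xs \<Longrightarrow> i < length xs - 1 \<Longrightarrow> remove_nth t xs ! i = xs ! (if i < t then i else Suc i)"
  by (auto simp: remove_nth_def nth_append min_def)

lemma sorted_list_of_set_lessThan_remove:
  assumes "t < n"
  shows "sorted_list_of_set ({..<n} - {t}) = [0..<t] @ [Suc t..<n]"
proof -
  have "sorted_list_of_set ({..<n} - {t}) = remove1 t [0..<n]"
    by (simp add: sorted_list_of_set_remove lessThan_atLeast0)
  also have "[0..<n] = [0..<t] @ t # [Suc t..<n]" using assms
    by (metis le_add1 less_imp_add_positive upt_add_eq_append upt_conv_Cons le0)
  finally show ?thesis by (simp add: remove1_append)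
qed

lemma map_nth_take: "t \<le> length xs \<Longrightarrow> map ((!) xs) [0..<t] = take t xs"
  by (rule nth_equalityI) auto

lemma map_nth_drop: "map ((!) xs) [t..<length xs] = drop t xs"
  by (rule nth_equalityI) auto

lemma sublist_at_remove: "t < length xs \<Longrightarrow> sublist_at xs ({..<length xs} - {t}) = remove_nth t xs"
  by (simp add: sublist_at_def sorted_list_of_set_lessThan_remove map_nth_take map_nth_drop remove_nth_def)

lemma sublist_at_singleton: "sublist_at xs {t} = [xs ! t]"
  by (simp add: sublist_at_def)

lemma sublist_at_all: "sublist_at xs {..<length xs} = xs"
  by (simp add: sublist_at_def lessThan_atLeast0 map_nth)

lemma unshuffle_exp_remove:
  assumes "t < length ks"
  shows "unshuffle_exp ks ({..<length ks} - {t}) = remove_exp ks t"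
proof -
  have "{(i,j). i<j \<and> j<length ks \<and> i\<notin>({..<length ks} - {t}) \<and> j\<in>({..<length ks} - {t})}
        = (\<lambda>j. (t,j)) ` {t<..<length ks}" by auto
  thus ?thesis unfolding unshuffle_exp_def remove_exp_def
    by (simp add: sum.reindex inj_on_def)
qed

lemma k_subsets_pred: "k_subsets (Suc m) m = (\<lambda>t. {..<Suc m} - {t}) ` {..<Suc m}"
proof (intro equalityI subsetI)
  fix S assume S: "S \<in> k_subsets (Suc m) m"
  hence f: "finite S" "S \<subseteq> {..<Suc m}" "card S = m" by (auto simp: k_subsets_def intro: finite_subset)
  have "card ({..<Suc m} - S) = 1" using f by (simp add: card_Diff_subset)
  then obtain t where t: "{..<Suc m} - S = {t}" by (auto simp: card_Suc_eq)
  hence "t < Suc m" "S = {..<Suc m} - {t}" using f by auto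
  thus "S \<in> (\<lambda>t. {..<Suc m} - {t}) ` {..<Suc m}" by auto
next
  fix S assume "S \<in> (\<lambda>t. {..<Suc m} - {t}) ` {..<Suc m}"
  thus "S \<in> k_subsets (Suc m) m" by (auto simp: k_subsets_def)
qed

lemma sum_k_subsets_pred: "(\<Sum>S\<in>k_subsets (Suc m) m. f S) = (\<Sum>t<Suc m. f ({..<Suc m} - {t}))"
proof -
  have "inj_on (\<lambda>t. {..<Suc m} - {t}) {..<Suc m}"
    by (rule inj_onI) blast
  then show ?thesis unfolding k_subsets_pred by (simp add: sum.reindex comp_def)
qed

lemma sum_k_subsets_pred_eq_sum_remove:
  assumes lk: "length ks = Suc m" and lv: "length vs = Suc m"
  shows "(\<Sum>S\<in>k_subsets (Suc m) m. f (unshuffle_exp ks S) (sublist_at ks S) (sublist_at vs S)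
            (sublist_at vs ({..<Suc m} - S) ! 0))
    = (\<Sum>t<Suc m. f (remove_exp ks t) (remove_nth t ks) (remove_nth t vs) (vs ! t))"
proof -
  have removed: "f (unshuffle_exp ks ({..<Suc m} - {t})) (sublist_at ks ({..<Suc m} - {t}))
      (sublist_at vs ({..<Suc m} - {t})) (sublist_at vs ({..<Suc m} - ({..<Suc m} - {t})) ! 0)
    = f (remove_exp ks t) (remove_nth t ks) (remove_nth t vs) (vs ! t)" if t: "t < Suc m" for t
  proof -
    have "{..<Suc m} - ({..<Suc m} - {t}) = {t}" using t by auto
    then show ?thesis
      using sublist_at_remove[of t ks] sublist_at_remove[of t vs] unshuffle_exp_remove[of t ks] t lk lv
      by (simp add: sublist_at_singleton)
  qed
  show ?thesis
    unfolding sum_k_subsets_pred by (rule sum.cong) (simp_all add: removed)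
qed

lemma length_swapadj[simp]: "length (swapadj xs j) = length xs"
  by (simp add: swapadj_def)

lemma nth_swapadj: "Suc j < length xs \<Longrightarrow> i < length xs \<Longrightarrow>
   swapadj xs j ! i = (if i = j then xs ! Suc j else if i = Suc j then xs ! j else xs ! i)"
  by (simp add: swapadj_def nth_list_update)


lemma sum_list_remove_nth: "t < length xs \<Longrightarrow> sum_list (remove_nth t xs) + xs ! t = sum_list (xs :: int list)"
proof -
  assume "t < length xs"
  hence "xs = take t xs @ xs ! t # drop (Suc t) xs" by (simp add: id_take_nth_drop)
  hence "sum_list xs = sum_list (take t xs) + xs ! t + sum_list (drop (Suc t) xs)"
    by (metis add.assoc sum_list.Cons sum_list_append)
  thus ?thesis by (simp add: remove_nth_def)
qed

lemma remove_nth_list_update: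
  assumes "t < length xs" "j < length xs"
  shows "remove_nth t (xs[j := z]) = (if t = j then remove_nth t xs else if t < j then (remove_nth t xs)[j - 1 := z] else (remove_nth t xs)[j := z])"
  by (rule nth_equalityI) (use assms in \<open>auto simp: nth_remove_nth nth_list_update\<close>)


lemma remove_nth_swapadj:
  assumes j: "Suc j < length xs" and t: "t < length xs"
  shows "t \<noteq> j \<Longrightarrow> t \<noteq> Suc j \<Longrightarrow>
      remove_nth t (swapadj xs j) = swapadj (remove_nth t xs) (if t < j then j - 1 else j)"
    and "remove_nth j (swapadj xs j) = remove_nth (Suc j) xs"
    and "remove_nth (Suc j) (swapadj xs j) = remove_nth j xs"
    using j t by (auto intro!: nth_equalityI simp: nth_remove_nth nth_swapadj not_less_less_Suc_eq)

lemma homog_remove_nth: "homog V ks vs \<Longrightarrow> t < length vs \<Longrightarrow> homog V (remove_nth t ks) (remove_nth t vs)"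
  by (auto simp: homog_def nth_remove_nth)



lemma remove_exp_swapadj:
  assumes j: "Suc j < length ks" and t: "t < length ks"
  shows "t \<noteq> j \<Longrightarrow> t \<noteq> Suc j \<Longrightarrow> remove_exp (swapadj ks j) t = remove_exp ks t"
    and "remove_exp (swapadj ks j) j = 1 + ks!j * ks!Suc j + remove_exp ks (Suc j)"
    and "remove_exp (swapadj ks j) (Suc j) + (1 + ks!j * ks!Suc j) = remove_exp ks j"
proof -
  let ?\<tau> = "Transposition.transpose j (Suc j)"
  assume a: "t \<noteq> j" "t \<noteq> Suc j"
  have "remove_exp (swapadj ks j) t = (\<Sum>i\<in>{t<..<length ks}. 1 + ks!t * ks!(?\<tau> i))"
    unfolding remove_exp_def by (rule sum.cong) (use a j t in \<open>auto simp: nth_swapadj transpose_def\<close>)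
  also have "\<dots> = (\<Sum>i\<in>?\<tau> ` {t<..<length ks}. 1 + ks!t * ks!i)"
    by (subst sum.reindex) simp_all
  also have "?\<tau> ` {t<..<length ks} = {t<..<length ks}"
  proof (cases "t < j")
    case True
    hence "?\<tau> permutes {t<..<length ks}" using j by (intro permutes_swap_id) auto
    thus ?thesis by (rule permutes_image)
  next
    case False
    thus ?thesis using a by (intro transpose_image_eq) auto
  qed
  finally show "remove_exp (swapadj ks j) t = remove_exp ks t" by (simp add: remove_exp_def)
next
  have s: "{j<..<length ks} = insert (Suc j) {Suc j<..<length ks}" using j by auto
  show "remove_exp (swapadj ks j) j = 1 + ks!j * ks!Suc j + remove_exp ks (Suc j)"
    unfolding remove_exp_def length_swapadj s
    by (subst sum.insert) (use j in \<open>auto simp: nth_swapadj mult.commute intro!: sum.cong\<close>)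
  show "remove_exp (swapadj ks j) (Suc j) + (1 + ks!j * ks!Suc j) = remove_exp ks j"
    unfolding remove_exp_def length_swapadj s
    by (subst sum.insert) (use j in \<open>auto simp: nth_swapadj intro!: sum.cong\<close>)
qed

lemma length_sublist_at[simp]: "finite S \<Longrightarrow> length (sublist_at xs S) = card S"
  by (simp add: sublist_at_def)

lemma nth_sublist_at: "finite T \<Longrightarrow> p < card T \<Longrightarrow> sublist_at xs T ! p = xs ! (sorted_list_of_set T ! p)"
  by (simp add: sublist_at_def)

lemma sum_list_sublist_at: "finite S \<Longrightarrow> sum_list (sublist_at ks S) = (\<Sum>j\<in>S. ks ! j)"
  by (simp add: sublist_at_def sum_list_distinct_conv_sum_set)

lemma remove_nth_distinct: "distinct L \<Longrightarrow> p < length L \<Longrightarrow> remove_nth p L = remove1 (L ! p) L"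
proof -
  assume a: "distinct L" "p < length L"
  hence L: "L = take p L @ L ! p # drop (Suc p) L" by (simp add: id_take_nth_drop)
  have "L ! p \<notin> set (take p L)"
    using a by (metis L distinct_append not_distinct_conv_prefix)
  hence "remove1 (L ! p) (take p L @ L ! p # drop (Suc p) L) = take p L @ drop (Suc p) L"
    by (simp add: remove1_append)
  thus ?thesis using L by (simp add: remove_nth_def)
qed

lemma map_remove_nth: "p < length L \<Longrightarrow> map f (remove_nth p L) = remove_nth p (map f L)"
  by (simp add: remove_nth_def take_map drop_map)

lemma remove_nth_sublist_at:
  assumes "finite T" "p < card T"
  shows "remove_nth p (sublist_at xs T) = sublist_at xs (T - {sorted_list_of_set T ! p})"
proof -
  have "remove_nth p (sorted_list_of_set T) = sorted_list_of_set (T - {sorted_list_of_set T ! p})"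
    using assms by (simp add: remove_nth_distinct sorted_list_of_set_remove)
  thus ?thesis unfolding sublist_at_def using assms by (metis length_sorted_list_of_set map_remove_nth)
qed

lemma sorted_list_of_set_nth_less_iff:
  assumes "finite T" "p < card T" "q < card T"
  shows "sorted_list_of_set T ! p < sorted_list_of_set T ! q \<longleftrightarrow> p < q"
proof -
  have s: "sorted_wrt (<) (sorted_list_of_set T)" by simp
  have l: "length (sorted_list_of_set T) = card T" by simp
  show ?thesis
  proof (cases rule: linorder_cases[of p q])
    case less thus ?thesis using sorted_wrt_nth_less[OF s less] assms l by simp
  next
    case equal thus ?thesis by simp
  next
    case greater thus ?thesis using sorted_wrt_nth_less[OF s greater] assms l by simp
  qed
qed

lemma remove_exp_sublist_at:
  assumes f: "finite T" and p: "p < card T"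
  shows "remove_exp (sublist_at ks T) p = (\<Sum>j\<in>{j\<in>T. sorted_list_of_set T ! p < j}. 1 + ks ! (sorted_list_of_set T ! p) * ks ! j)"
proof -
  let ?L = "sorted_list_of_set T"
  have d: "distinct ?L" "set ?L = T" "length ?L = card T" using f by auto
  have "remove_exp (sublist_at ks T) p = (\<Sum>q\<in>{p<..<card T}. 1 + ks ! (?L ! p) * ks ! (?L ! q))"
    unfolding remove_exp_def using f p by (intro sum.cong) (auto simp: nth_sublist_at)
  also have "\<dots> = (\<Sum>j\<in>(!) ?L ` {p<..<card T}. 1 + ks ! (?L ! p) * ks ! j)"
  proof (rule sum.reindex[symmetric, unfolded comp_def])
    show "inj_on ((!) ?L) {p<..<card T}" by (rule inj_on_nth) (use d in auto)
  qed
  also have "(!) ?L ` {p<..<card T} = {j\<in>T. ?L ! p < j}"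
  proof (intro equalityI subsetI)
    fix j assume "j \<in> (!) ?L ` {p<..<card T}"
    then obtain q where q: "p < q" "q < card T" "j = ?L ! q" by auto
    have "j \<in> T" using q d by (metis nth_mem)
    moreover have "?L ! p < j" using q sorted_list_of_set_nth_less_iff[OF f p q(2)] by simp
    ultimately show "j \<in> {j\<in>T. ?L ! p < j}" by simp
  next
    fix j assume j: "j \<in> {j\<in>T. ?L ! p < j}"
    have "j \<in> set ?L" using j d by simp
    then obtain q where q: "q < card T" "j = ?L ! q" using d(3) by (metis in_set_conv_nth)
    have "p < q" using j q sorted_list_of_set_nth_less_iff[OF f p q(1)] by simp
    thus "j \<in> (!) ?L ` {p<..<card T}" using q by auto
  qed
  finally show ?thesis .
qed

definition skip :: "nat \<Rightarrow> nat \<Rightarrow> nat" where "skip t i = (if i < t then i else Suc i)"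

lemma skip_mono: "i < j \<Longrightarrow> skip t i < skip t j" by (simp add: skip_def)
lemma inj_skip: "inj (skip t)" by (auto simp: inj_def skip_def split: if_splits)
lemma skip_neq[simp]: "skip t i \<noteq> t" by (simp add: skip_def)
lemma skip_neq'[simp]: "t \<noteq> skip t i" by (simp add: skip_def)

lemma sorted_list_of_set_skip_image:
  assumes "finite S'"
  shows "sorted_list_of_set (skip t ` S') = map (skip t) (sorted_list_of_set S')"
proof -
  have "sorted_wrt (\<lambda>x y. skip t x < skip t y) (sorted_list_of_set S')"
    by (rule sorted_wrt_mono_rel[of _ "(<)"]) (auto intro: skip_mono)
  hence "sorted_wrt (<) (map (skip t) (sorted_list_of_set S'))"
    by (simp add: sorted_wrt_map)
  moreover have "card (skip t ` S') = card S'" by (rule card_image) (rule inj_on_subset[OF inj_skip], simp)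
  ultimately show ?thesis using assms
    by (subst sorted_list_of_set_unique[symmetric]) auto
qed

lemma sublist_at_remove_nth:
  assumes "S' \<subseteq> {..<length xs - 1}" "t < length xs"
  shows "sublist_at (remove_nth t xs) S' = sublist_at xs (skip t ` S')"
proof -
  have f: "finite S'" using assms finite_subset by blast
  have "remove_nth t xs ! i = xs ! skip t i" if "i \<in> S'" for i
    using that assms by (subst nth_remove_nth) (auto simp: skip_def)
  thus ?thesis unfolding sublist_at_def sorted_list_of_set_skip_image[OF f] using f by simp
qed

lemma skip_image_compl:
  assumes "t < n" "S' \<subseteq> {..<n - 1}"
  shows "{..<n} - skip t ` S' - {t} = skip t ` ({..<n - 1} - S')"
proof (intro equalityI subsetI)
  fix x assume x: "x \<in> {..<n} - skip t ` S' - {t}"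
  define y where "y = (if x < t then x else x - 1)"
  have "skip t y = x" "y < n - 1" using x assms by (auto simp: y_def skip_def)
  moreover have "y \<notin> S'" using x \<open>skip t y = x\<close> by auto
  ultimately show "x \<in> skip t ` ({..<n - 1} - S')" by (metis DiffI image_eqI lessThan_iff)
next
  fix x assume "x \<in> skip t ` ({..<n - 1} - S')"
  then obtain y where y: "y < n - 1" "y \<notin> S'" "x = skip t y" by auto
  have "x \<notin> skip t ` S'" using y inj_image_mem_iff[OF inj_skip] by auto
  thus "x \<in> {..<n} - skip t ` S' - {t}" using y assms by (auto simp: skip_def)
qed

definition unskip :: "nat \<Rightarrow> nat \<Rightarrow> nat" where "unskip t i = (if i < t then i else i - 1)"

lemma unskip_skip[simp]: "unskip t (skip t i) = i" by (simp add: unskip_def skip_def)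
lemma skip_unskip: "x \<noteq> t \<Longrightarrow> skip t (unskip t x) = x" unfolding unskip_def skip_def by presburger

lemma bij_betw_skip_k_subsets:
  assumes t: "t < n"
  shows "bij_betw (\<lambda>S'. skip t ` S') (k_subsets (n - 1) k) {S\<in>k_subsets n k. t \<notin> S}"
proof (rule bij_betw_byWitness[where f'="\<lambda>S. unskip t ` S"])
  show "\<forall>S'\<in>k_subsets (n - 1) k. unskip t ` skip t ` S' = S'"
    by (simp add: image_image)
  show "\<forall>S\<in>{S \<in> k_subsets n k. t \<notin> S}. skip t ` unskip t ` S = S"
  proof
    fix S assume "S \<in> {S \<in> k_subsets n k. t \<notin> S}"
    hence "t \<notin> S" by auto
    hence "\<forall>x\<in>S. skip t (unskip t x) = x" using skip_unskip by metis
    thus "skip t ` unskip t ` S = S" by (simp add: image_image)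
  qed
  show "(\<lambda>S'. skip t ` S') ` k_subsets (n - 1) k \<subseteq> {S \<in> k_subsets n k. t \<notin> S}"
  proof
    fix S assume "S \<in> (\<lambda>S'. skip t ` S') ` k_subsets (n - 1) k"
    then obtain S' where S': "S' \<in> k_subsets (n-1) k" "S = skip t ` S'" by auto
    have "card (skip t ` S') = card S'" by (rule card_image) (rule inj_on_subset[OF inj_skip], simp)
    thus "S \<in> {S \<in> k_subsets n k. t \<notin> S}" using S' t
      by (auto simp: k_subsets_def skip_def subset_iff)
  qed
  show "(\<lambda>S. unskip t ` S) ` {S \<in> k_subsets n k. t \<notin> S} \<subseteq> k_subsets (n - 1) k"
  proof
    fix S' assume "S' \<in> (\<lambda>S. unskip t ` S) ` {S \<in> k_subsets n k. t \<notin> S}"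
    then obtain S where S: "S \<in> k_subsets n k" "t \<notin> S" "S' = unskip t ` S" by auto
    have "inj_on (unskip t) S" by (rule inj_on_inverseI[where g="skip t"]) (metis S(2) skip_unskip)
    hence "card S' = card S" using S by (simp add: card_image)
    have u: "unskip t x < n - 1" if "x \<in> S" for x
    proof -
      have "x < n" "x \<noteq> t" using S that by (auto simp: k_subsets_def)
      thus ?thesis using t unfolding unskip_def by presburger
    qed
    show "S' \<in> k_subsets (n - 1) k" using S u \<open>card S' = card S\<close> by (auto simp: k_subsets_def)
  qed
qed

lemma cross_pairs_skip_image:
  assumes t: "t < n" and S': "S' \<subseteq> {..<n - 1}"
  shows "{(i,j). i<j \<and> j<n \<and> i\<notin>skip t ` S' \<and> j\<in>skip t ` S'}
    = (\<lambda>j. (t,j)) ` {j\<in>skip t ` S'. t < j}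
      \<union> (\<lambda>(i,j). (skip t i, skip t j)) ` {(i,j). i<j \<and> j<n - 1 \<and> i\<notin>S' \<and> j\<in>S'}"
    (is "?P = ?A \<union> ?B")
proof (intro equalityI subsetI)
  fix x assume x: "x \<in> ?P"
  obtain i j where ij: "x = (i,j)" by (cases x)
  show "x \<in> ?A \<union> ?B"
  proof (cases "i = t")
    case True thus ?thesis using x ij by auto
  next
    case False
    obtain j' where j': "j' \<in> S'" "j = skip t j'" using x ij by auto
    define i' where "i' = unskip t i"
    have ii: "skip t i' = i" using False by (auto simp: i'_def unskip_def skip_def)
    have "i' \<notin> S'" using x ij ii by (metis (no_types, lifting) case_prodD image_eqI mem_Collect_eq)
    moreover have "i' < j'" using x ij ii j' by (metis (no_types, lifting) case_prodD skip_mono linorder_neqE_nat mem_Collect_eq order.asym)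
    moreover have "j' < n - 1" using j' S' by auto
    ultimately have "(i', j') \<in> {(i,j). i<j \<and> j<n - 1 \<and> i\<notin>S' \<and> j\<in>S'}" using j'(1) by simp
    thus ?thesis using ij ii j' by force
  qed
next
  fix x assume "x \<in> ?A \<union> ?B"
  thus "x \<in> ?P"
  proof
    assume "x \<in> ?A"
    thus ?thesis using S' t skip_neq by (auto simp: skip_def)
  next
    assume "x \<in> ?B"
    then obtain i j where ij: "i < j" "j < n - 1" "i \<notin> S'" "j \<in> S'" "x = (skip t i, skip t j)" by auto
    have "skip t i \<notin> skip t ` S'" using ij inj_image_mem_iff[OF inj_skip] by auto
    moreover have "skip t j < n" using ij t by (auto simp: skip_def)
    ultimately show ?thesis using ij skip_mono by auto
  qed
qed

lemma unshuffle_exp_skip: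
  assumes t: "t < length ks" and S': "S' \<subseteq> {..<length ks - 1}"
  shows "unshuffle_exp ks (skip t ` S') = unshuffle_exp (remove_nth t ks) S' + (\<Sum>j\<in>{j\<in>skip t ` S'. t < j}. 1 + ks!t * ks!j)"
proof -
  let ?S = "skip t ` S'"
  let ?A = "(\<lambda>j. (t,j)) ` {j\<in>?S. t < j}"
  let ?P' = "{(i,j). i<j \<and> j<length ks - 1 \<and> i\<notin>S' \<and> j\<in>S'}"
  let ?B = "(\<lambda>(i,j). (skip t i, skip t j)) ` ?P'"
  have "finite S'" using S' finite_subset by blast
  moreover have "finite ?P'" by (rule finite_subset[of _ "{..<length ks} \<times> {..<length ks}"]) auto
  ultimately have fin: "finite ?A" "finite ?B" by auto
  have disj: "?A \<inter> ?B = {}"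
    using skip_neq by auto
  have "unshuffle_exp ks ?S = (\<Sum>x\<in>?A. (\<lambda>(i,j). 1 + ks!i * ks!j) x) + (\<Sum>x\<in>?B. (\<lambda>(i,j). 1 + ks!i * ks!j) x)"
    unfolding unshuffle_exp_def cross_pairs_skip_image[OF t S'] by (rule sum.union_disjoint[OF fin disj])
  also have "(\<Sum>x\<in>?A. (\<lambda>(i,j). 1 + ks!i * ks!j) x) = (\<Sum>j\<in>{j\<in>?S. t < j}. 1 + ks!t * ks!j)"
    by (subst sum.reindex) (auto simp: inj_on_def)
  also have "(\<Sum>x\<in>?B. (\<lambda>(i,j). 1 + ks!i * ks!j) x) = unshuffle_exp (remove_nth t ks) S'"
  proof -
    have inj: "inj_on (\<lambda>(i,j). (skip t i, skip t j)) ?P'"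
      using inj_skip by (auto simp: inj_on_def inj_def)
    have "(\<Sum>x\<in>?B. (\<lambda>(i,j). 1 + ks!i * ks!j) x) = (\<Sum>x\<in>?P'. (\<lambda>(i,j). 1 + ks!skip t i * ks!skip t j) x)"
      by (subst sum.reindex[OF inj]) (simp add: case_prod_beta)
    also have "\<dots> = unshuffle_exp (remove_nth t ks) S'" unfolding unshuffle_exp_def
      by (rule sum.cong) (use t in \<open>auto simp: nth_remove_nth skip_def\<close>)
    finally show ?thesis .
  qed
  finally show ?thesis by simp
qed

lemma remove_exp_split:
  assumes "t < length ks" "t \<notin> S"
  shows "remove_exp ks t = (\<Sum>j\<in>{j\<in>S. t < j \<and> j < length ks}. 1 + ks!t * ks!j) + (\<Sum>j\<in>{j\<in>{..<length ks} - S. t < j}. 1 + ks!t * ks!j)"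
proof -
  have "{t<..<length ks} = {j\<in>S. t < j \<and> j < length ks} \<union> {j\<in>{..<length ks} - S. t < j}" by auto
  thus ?thesis unfolding remove_exp_def by (subst sum.union_disjoint[symmetric]) auto
qed

lemma unshuffle_exp_skip_remove_exp:
  assumes t: "t < length ks" and S': "S' \<subseteq> {..<length ks - 1}"
  shows "unshuffle_exp ks (skip t ` S') + (\<Sum>j\<in>{j\<in>{..<length ks} - skip t ` S'. t < j}. 1 + ks!t * ks!j)
    = remove_exp ks t + unshuffle_exp (remove_nth t ks) S'"
proof -
  have "t \<notin> skip t ` S'" by auto
  moreover have "{j\<in>skip t ` S'. t < j \<and> j < length ks} = {j\<in>skip t ` S'. t < j}"
    using S' t by (auto simp: skip_def)
  ultimately show ?thesis
    using unshuffle_exp_skip[OF t S'] remove_exp_split[OF t, of "skip t ` S'"] by simp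
qed

lemma unshuffle_exp_compl:
  assumes S: "S \<subseteq> {..<length ks}"
  shows "unshuffle_exp ks S + unshuffle_exp ks ({..<length ks} - S)
     = int (card S * card ({..<length ks} - S)) + (\<Sum>j\<in>S. ks!j) * (\<Sum>i\<in>{..<length ks} - S. ks!i)"
proof -
  let ?n = "length ks"
  let ?T = "{..<?n} - S"
  have fS: "finite S" using S finite_subset by blast
  let ?A = "{(i,j). i<j \<and> j<?n \<and> i\<notin>S \<and> j\<in>S}"
  let ?B = "{(i,j). i<j \<and> j<?n \<and> i\<notin>?T \<and> j\<in>?T}"
  have e1: "unshuffle_exp ks S = (\<Sum>x\<in>?A. (\<lambda>(i,j). 1 + ks!i * ks!j) x)" by (simp add: unshuffle_exp_def)
  have e2: "unshuffle_exp ks ?T = (\<Sum>x\<in>(\<lambda>(i,j). (j,i)) ` ?B. (\<lambda>(i,j). 1 + ks!i * ks!j) x)"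
    unfolding unshuffle_exp_def by (subst sum.reindex) (auto simp: inj_on_def mult.commute intro!: sum.cong)
  have u: "?A \<union> (\<lambda>(i,j). (j,i)) ` ?B = ?T \<times> S"
  proof (intro equalityI subsetI)
    fix x assume "x \<in> ?T \<times> S"
    then obtain i j where ij: "x = (i,j)" "i \<in> ?T" "j \<in> S" by auto
    have "j < ?n" using ij S by auto
    show "x \<in> ?A \<union> (\<lambda>(i,j). (j,i)) ` ?B"
    proof (cases "i < j")
      case True thus ?thesis using ij \<open>j < ?n\<close> by auto
    next
      case False
      hence "j < i" using ij by (metis DiffD2 linorder_neqE_nat)
      hence "(j,i) \<in> ?B" using ij by auto
      thus ?thesis using ij by (auto simp: image_iff)
    qed
  qed auto
  have dj: "?A \<inter> (\<lambda>(i,j). (j,i)) ` ?B = {}" by auto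
  have "unshuffle_exp ks S + unshuffle_exp ks ?T = (\<Sum>x\<in>?T \<times> S. (\<lambda>(i,j). 1 + ks!i * ks!j) x)"
    unfolding e1 e2 u[symmetric]
    by (rule sum.union_disjoint[symmetric]) (use dj in \<open>auto intro: finite_subset[of _ "{..<?n} \<times> {..<?n}"]\<close>)
  also have "\<dots> = (\<Sum>i\<in>?T. \<Sum>j\<in>S. 1 + ks!i * ks!j)"
    by (simp add: sum.cartesian_product)
  also have "\<dots> = int (card S * card ?T) + (\<Sum>j\<in>S. ks!j) * (\<Sum>i\<in>?T. ks!i)"
    by (simp add: sum.distrib sum_distrib_left sum_distrib_right mult.commute)
  finally show ?thesis .
qed


lemma remove_exp_Cons_0: "remove_exp (c # ks) 0 = (\<Sum>p<length ks. 1 + c * ks ! p)"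
proof -
  have "{0<..<Suc (length ks)} = Suc ` {..<length ks}" by (auto simp: image_iff gr0_conv_Suc)
  thus ?thesis unfolding remove_exp_def by (simp add: sum.reindex)
qed

lemma remove_exp_Cons_Suc: "remove_exp (c # ks) (Suc p) = remove_exp ks p"
proof -
  have "{Suc p<..<Suc (length ks)} = Suc ` {p<..<length ks}"
    by (auto simp: image_iff) (metis Suc_lessE Suc_less_SucD greaterThanLessThan_iff)
  thus ?thesis unfolding remove_exp_def by (simp add: sum.reindex)
qed

lemma remove_nth_Cons_0[simp]: "remove_nth 0 (c # xs) = xs" by (simp add: remove_nth_def)
lemma remove_nth_Cons_Suc[simp]: "remove_nth (Suc p) (c # xs) = c # remove_nth p xs" by (simp add: remove_nth_def)

lemma homog_sublist_at:
  assumes h: "homog V ks vs" and S: "S \<subseteq> {..<length vs}"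
  shows "homog V (sublist_at ks S) (sublist_at vs S)"
proof -
  have f: "finite S" using S finite_subset by blast
  have "sorted_list_of_set S ! p \<in> S" if "p < card S" for p
    using that f by (metis length_sorted_list_of_set nth_mem set_sorted_list_of_set)
  hence "sorted_list_of_set S ! p < length vs" if "p < card S" for p using that S by auto
  thus ?thesis using h f by (auto simp: homog_def nth_sublist_at)
qed

lemma sum_one_plus_mult_nth:
  "(\<Sum>p<length xs. 1 + c * xs ! p) = int (length xs) + c * sum_list (xs :: int list)"
  by (simp add: sum.distrib sum_distrib_left sum_list_sum_nth atLeast0LessThan)

lemma sublist_at_empty[simp]: "sublist_at xs {} = []" by (simp add: sublist_at_def)

lemma finite_k_subsets: "finite (k_subsets n k)"
  by (rule finite_subset[of _ "Pow {..<n}"]) (auto simp: k_subsets_def)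

lemma sum_k_subsets_compl_swap:
  "(\<Sum>k\<in>K. \<Sum>S\<in>k_subsets n k. \<Sum>t\<in>{..<n} - S. F S t)
     = (\<Sum>t<n. \<Sum>k\<in>K. \<Sum>S\<in>{S\<in>k_subsets n k. t \<notin> S}. F S t)"
proof -
  have "(\<Sum>S\<in>k_subsets n k. \<Sum>t\<in>{..<n} - S. F S t)
      = (\<Sum>t<n. \<Sum>S\<in>{S\<in>k_subsets n k. t \<notin> S}. F S t)" for k
  proof -
    have "{..<n} - S = {t. t \<in> {..<n} \<and> t \<notin> S}" for S by auto
    then show ?thesis
      using sum.swap_restrict[OF finite_k_subsets finite_lessThan, where g=F and R="\<lambda>S t. t \<notin> S"]
      by simp
  qed
  then show ?thesis by (simp add: sum.swap[of _ K])
qed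

section \<open>The L-infinity sums over subsets\<close>

(* The summand of linf_sum for the unshuffle mapping {..<k} onto S. *)
definition linf_term :: "(int list \<Rightarrow> 'v list \<Rightarrow> 'v) \<Rightarrow> (int list \<Rightarrow> 'v list \<Rightarrow> 'v)
    \<Rightarrow> int list \<Rightarrow> 'v::ab_group_add list \<Rightarrow> nat \<Rightarrow> nat set \<Rightarrow> 'v" where
  "linf_term G M ks vs k S = signed (unshuffle_exp ks S + int (k * (length vs - k)))
     (G ((sum_list (sublist_at ks S) + 2 - int k) # sublist_at ks ({..<length vs} - S))
        (M (sublist_at ks S) (sublist_at vs S) # sublist_at vs ({..<length vs} - S)))"

lemma linf_sum_eq_sum_k_subsets:
  assumes vector_space_sc: "vector_space sc" and lk: "length ks = length vs"
  shows "linf_sum sc G M ks vs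
    = (\<Sum>k\<in>{1..length vs}. \<Sum>S\<in>k_subsets (length vs) k. linf_term G M ks vs k S)"
  unfolding linf_sum_def Let_def
proof (intro sum.cong refl)
  fix k assume "k \<in> {1..length vs}"
  then have kn: "k \<le> length vs" by simp
  show "(\<Sum>\<sigma>\<in>shuffles k (length vs). sc (of_int (sign \<sigma> * (- 1) ^ (k * (length vs - k)) * koszul ks \<sigma>))
           (G ((sum_list (psub ks \<sigma> 0 k) + 2 - int k) # psub ks \<sigma> k (length vs))
              (M (psub ks \<sigma> 0 k) (psub vs \<sigma> 0 k) # psub vs \<sigma> k (length vs))))
      = (\<Sum>S\<in>k_subsets (length vs) k. linf_term G M ks vs k S)"
    unfolding sum_shuffles_eq_sum_k_subsets[OF kn]
  proof (rule sum.cong[OF refl])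
    fix S assume S: "S \<in> k_subsets (length vs) k"
    have "sign (unshuffle_of (length vs) k S) * (- 1) ^ (k * (length vs - k)) * koszul ks (unshuffle_of (length vs) k S)
        = (sign (unshuffle_of (length vs) k S) * koszul ks (unshuffle_of (length vs) k S)) * (- 1) ^ (k * (length vs - k))"
      by (simp only: mult_ac)
    also have "\<dots> = neg_one_pow (unshuffle_exp ks S + int (k * (length vs - k)))"
      by (simp only: sign_koszul_unshuffle_of[OF S lk] power_minus_one_eq neg_one_pow_add)
    finally have "sign (unshuffle_of (length vs) k S) * (- 1) ^ (k * (length vs - k)) * koszul ks (unshuffle_of (length vs) k S)
        = neg_one_pow (unshuffle_exp ks S + int (k * (length vs - k)))" .
    then show "sc (of_int (sign (unshuffle_of (length vs) k S) * (- 1) ^ (k * (length vs - k))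
             * koszul ks (unshuffle_of (length vs) k S)))
           (G ((sum_list (psub ks (unshuffle_of (length vs) k S) 0 k) + 2 - int k)
                # psub ks (unshuffle_of (length vs) k S) k (length vs))
              (M (psub ks (unshuffle_of (length vs) k S) 0 k) (psub vs (unshuffle_of (length vs) k S) 0 k)
                # psub vs (unshuffle_of (length vs) k S) k (length vs)))
        = linf_term G M ks vs k S"
      by (simp only: linf_term_def scale_neg_one_pow[OF vector_space_sc] psub_unshuffle_of[OF S])
  qed
qed

lemma sum_k_subsets_all_linf_term:
  assumes "length ks = length vs"
  shows "(\<Sum>S\<in>k_subsets (length vs) (length vs). linf_term G M ks vs (length vs) S)
    = G [sum_list ks + 2 - int (length vs)] [M ks vs]"
  using assms sublist_at_all[of ks] sublist_at_all[of vs]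
  by (simp add: linf_term_def k_subsets_all unshuffle_exp_all)

lemma dab_linf_relation:
  assumes vector_space_sc: "vector_space sc" and lk: "length ks = length vs"
    and d0: "d 0 = 0" and dd: "\<And>x. d (d x) = 0"
  shows "linf_sum sc (dab d) (dab d) ks vs = 0"
  unfolding linf_sum_eq_sum_k_subsets[OF vector_space_sc lk]
proof (intro sum.neutral ballI)
  fix k S assume k: "k \<in> {1..length vs}" and S: "S \<in> k_subsets (length vs) k"
  have fS: "finite S" "card S = k" "S \<subseteq> {..<length vs}"
    using S by (auto simp: k_subsets_def intro: finite_subset)
  have "length (sublist_at vs ({..<length vs} - S)) = length vs - k"
    using fS by (simp add: card_Diff_subset)
  then show "linf_term (dab d) (dab d) ks vs k S = 0"
    using fS k d0 dd by (cases "k = length vs") (auto simp: linf_term_def dab_def)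
qed

section \<open>The brackets\<close>

locale dgla_eta =
  fixes sc :: "'k::field_char_0 \<Rightarrow> 'v::ab_group_add \<Rightarrow> 'v"
    and V :: "int \<Rightarrow> 'v set"
    and d eta :: "'v \<Rightarrow> 'v"
    and br :: "'v \<Rightarrow> 'v \<Rightarrow> 'v"
  assumes dgla: "DGLA sc V d br" and eta_graded: "graded_lin sc V (-1) eta"
begin

(* The antisymmetry conjunct makes the simplifier loop, so conjuncts are extracted by elim. *)
lemmas dgla_unfolded = dgla[unfolded DGLA_def]

lemma graded: "graded_vs sc V"
  using dgla_unfolded by (elim conjE)

lemma vector_space_sc: "vector_space sc"
  using graded by (simp add: graded_vs_def)

lemma module_sc: "module sc"
  using vector_space_sc by (simp add: module_iff_vector_space)

lemma V0[simp]: "0 \<in> V i" using graded by (simp add: graded_vs_def)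
lemma Vadd: "x \<in> V i \<Longrightarrow> y \<in> V i \<Longrightarrow> x + y \<in> V i" using graded by (simp add: graded_vs_def)
lemma Vsc: "x \<in> V i \<Longrightarrow> sc c x \<in> V i" using graded by (simp add: graded_vs_def)
lemma Vneg: "x \<in> V i \<Longrightarrow> - x \<in> V i"
  using Vsc[of x i "-1"] module.scale_minus_left[OF module_sc] module.scale_one[OF module_sc] by simp
lemma Vsigned: "x \<in> V i \<Longrightarrow> signed z x \<in> V i" by (simp add: signed_def Vneg)
lemma Vsum: "(\<And>a. a \<in> A \<Longrightarrow> f a \<in> V i) \<Longrightarrow> sum f A \<in> V i"
proof (induction A rule: infinite_finite_induct)
  case (insert x F) thus ?case by (simp add: Vadd)
qed simp_all

lemma sc_neg_one_pow: "sc (of_int (neg_one_pow z)) x = signed z x" by (rule scale_neg_one_pow[OF vector_space_sc])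
lemma sc_signed: "sc c (signed z x) = signed z (sc c x)"
  by (simp add: signed_def module.scale_minus_right[OF module_sc])
lemma sc_sum: "sc c (sum f A) = (\<Sum>a\<in>A. sc c (f a))"
  by (rule module.scale_sum_right[OF module_sc])
lemma sc_add: "sc c (x + y) = sc c x + sc c y"
  by (rule module.scale_right_distrib[OF module_sc])
lemma sc_one: "sc 1 x = x" by (rule module.scale_one[OF module_sc])
lemma sc_zero_left: "sc 0 x = 0" by (rule module.scale_zero_left[OF module_sc])
lemma sc_zero_right: "sc c 0 = 0" by (rule module.scale_zero_right[OF module_sc])
lemma minus_sc_ksign: "- sc (of_int (ksign a b)) z = signed (1 + a * b) z"
  by (simp add: ksign_eq_neg_one_pow sc_neg_one_pow signed_def)

lemma d_graded: "graded_lin sc V 1 d"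
  using dgla_unfolded by (elim conjE)

lemma hom_d: "module_hom sc sc d"
  using d_graded by (simp add: graded_lin_def module_hom_iff_linear)
lemma hom_eta: "module_hom sc sc eta"
  using eta_graded by (simp add: graded_lin_def module_hom_iff_linear)
lemma hom_br_right: "module_hom sc sc (br x)"
proof -
  have "\<forall>x. Vector_Spaces.linear sc sc (br x)" using dgla_unfolded by (elim conjE)
  then show ?thesis by (simp add: module_hom_iff_linear)
qed
lemma hom_br_left: "module_hom sc sc (\<lambda>x. br x y)"
proof -
  have "\<forall>y. Vector_Spaces.linear sc sc (\<lambda>x. br x y)" using dgla_unfolded by (elim conjE)
  then show ?thesis by (simp add: module_hom_iff_linear)
qed

lemma d_add: "d (x + y) = d x + d y" by (rule module_hom.add[OF hom_d])
lemma d_diff: "d (x - y) = d x - d y" by (rule module_hom.diff[OF hom_d])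
lemma d_zero[simp]: "d 0 = 0" by (rule module_hom.zero[OF hom_d])
lemma d_sum: "d (sum f A) = (\<Sum>a\<in>A. d (f a))" by (rule module_hom.sum[OF hom_d])
lemma d_sc: "d (sc c x) = sc c (d x)" by (rule module_hom.scale[OF hom_d])
lemma d_signed: "d (signed z x) = signed z (d x)" by (rule odd_fun_signed) (rule module_hom.neg[OF hom_d])

lemma eta_add: "eta (x + y) = eta x + eta y" by (rule module_hom.add[OF hom_eta])
lemma eta_zero[simp]: "eta 0 = 0" by (rule module_hom.zero[OF hom_eta])
lemma eta_sum: "eta (sum f A) = (\<Sum>a\<in>A. eta (f a))" by (rule module_hom.sum[OF hom_eta])
lemma eta_sc: "eta (sc c x) = sc c (eta x)" by (rule module_hom.scale[OF hom_eta])
lemma eta_signed: "eta (signed z x) = signed z (eta x)" by (rule odd_fun_signed) (rule module_hom.neg[OF hom_eta])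

lemma br_add_right: "br x (y + z) = br x y + br x z" by (rule module_hom.add[OF hom_br_right])
lemma br_zero_right[simp]: "br x 0 = 0" by (rule module_hom.zero[OF hom_br_right])
lemma br_sc_right: "br x (sc c y) = sc c (br x y)" by (rule module_hom.scale[OF hom_br_right])

lemma br_add_left: "br (x + y) z = br x z + br y z" by (rule module_hom.add[OF hom_br_left])
lemma br_zero_left[simp]: "br 0 y = 0" by (rule module_hom.zero[OF hom_br_left])
lemma br_sum_left: "br (sum f A) y = (\<Sum>a\<in>A. br (f a) y)" by (rule module_hom.sum[OF hom_br_left])
lemma br_sc_left: "br (sc c x) y = sc c (br x y)" by (rule module_hom.scale[OF hom_br_left])
lemma br_signed_left: "br (signed z x) y = signed z (br x y)"
  by (rule odd_fun_signed[where f="\<lambda>x. br x y"]) (rule module_hom.neg[OF hom_br_left])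

lemma d_deg: "x \<in> V i \<Longrightarrow> d x \<in> V (i + 1)"
  using d_graded unfolding graded_lin_def by blast
lemma eta_deg: "x \<in> V i \<Longrightarrow> eta x \<in> V (i - 1)"
  using eta_graded by (simp add: graded_lin_def)
lemma br_deg: "x \<in> V i \<Longrightarrow> y \<in> V j \<Longrightarrow> br x y \<in> V (i + j)"
proof -
  have "\<forall>i j x y. x \<in> V i \<longrightarrow> y \<in> V j \<longrightarrow> br x y \<in> V (i + j)"
    using dgla_unfolded by (elim conjE)
  then show "x \<in> V i \<Longrightarrow> y \<in> V j \<Longrightarrow> br x y \<in> V (i + j)" by blast
qed
lemma d_d[simp]: "d (d x) = 0"
proof -
  have "\<forall>v. d (d v) = 0" using dgla_unfolded by (elim conjE)
  then show ?thesis by blast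
qed

lemma br_swap:
  assumes "x \<in> V i" and "y \<in> V j"
  shows "br x y = signed (1 + i * j) (br y x)"
proof -
  have "\<forall>i j x y. x \<in> V i \<longrightarrow> y \<in> V j \<longrightarrow> br x y = - sc (of_int (ksign i j)) (br y x)"
    using dgla_unfolded by (elim conjE)
  then have "br x y = - sc (of_int (ksign i j)) (br y x)"
    using assms by blast
  then show ?thesis by (simp add: minus_sc_ksign)
qed

lemma d_br:
  assumes "x \<in> V i"
  shows "d (br x y) = br (d x) y + signed i (br x (d y))"
proof -
  have "d (br x y) = br (d x) y + sc (of_int ((-1) ^ nat \<bar>i\<bar>)) (br x (d y))"
  proof -
    have "\<forall>i x y. x \<in> V i \<longrightarrow> d (br x y) = br (d x) y + sc (of_int ((-1) ^ nat \<bar>i\<bar>)) (br x (d y))"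
      using dgla_unfolded by (elim conjE)
    then show ?thesis using assms by blast
  qed
  also have "(-1::int) ^ nat \<bar>i\<bar> = neg_one_pow i"
    by (simp add: power_minus_one_eq neg_one_pow_def)
  finally show ?thesis by (simp add: sc_neg_one_pow)
qed


abbreviation "mu \<equiv> kmu sc d br eta"

definition eta_removal_sum :: "nat \<Rightarrow> int list \<Rightarrow> 'v list \<Rightarrow> 'v" where
  "eta_removal_sum m ks vs = (\<Sum>t<m. signed (remove_exp ks t)
     (eta (br (mu (m - 1) (remove_nth t ks) (remove_nth t vs)) (vs ! t))))"

lemma kmu_2: "mu 2 ks vs = d (eta (br (vs!0) (vs!1))) + eta (d (br (vs!0) (vs!1)))"
  by (simp add: numeral_2_eq_2)

lemma kmu_rec:
  assumes m: "2 \<le> m" and lk: "length ks = Suc m" and lv: "length vs = Suc m"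
  shows "mu (Suc m) ks vs = signed (int (Suc m)) (eta_removal_sum (Suc m) ks vs)"
proof -
  have last: "vs ! unshuffle_of (Suc m) m S m = sublist_at vs ({..<Suc m} - S) ! 0"
    if "S \<in> k_subsets (Suc m) m" for S
    using arg_cong[OF psub_unshuffle_of(2)[OF that, of vs], of "\<lambda>l. l ! 0"] by (simp add: psub_def)
  have "mu (Suc m) ks vs = sc (of_int ((-1) ^ Suc m)) (\<Sum>\<sigma>\<in>shuffles m (Suc m).
      sc (of_int (sign \<sigma> * koszul ks \<sigma>)) (eta (br (mu m (psub ks \<sigma> 0 m) (psub vs \<sigma> 0 m)) (vs ! \<sigma> m))))"
    using m by simp
  also have "\<dots> = signed (int (Suc m)) (\<Sum>S\<in>k_subsets (Suc m) m. signed (unshuffle_exp ks S)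
      (eta (br (mu m (sublist_at ks S) (sublist_at vs S)) (sublist_at vs ({..<Suc m} - S) ! 0))))"
    unfolding power_minus_one_eq sc_neg_one_pow sum_shuffles_eq_sum_k_subsets[OF le_SucI[OF order_refl]]
    by (intro arg_cong[where f="signed (int (Suc m))"] sum.cong refl)
      (simp only: sign_koszul_unshuffle_of[OF _ lk] psub_unshuffle_of(1) last sc_neg_one_pow)
  also have "\<dots> = signed (int (Suc m)) (eta_removal_sum (Suc m) ks vs)"
    using sum_k_subsets_pred_eq_sum_remove[OF lk lv, of "\<lambda>e a b c. signed e (eta (br (mu m a b) c))"]
    by (simp add: eta_removal_sum_def)
  finally show ?thesis .
qed

lemma kmu_deg:
  "homog V ks vs \<Longrightarrow> length vs = n \<Longrightarrow> 1 \<le> n \<Longrightarrow> mu n ks vs \<in> V (sum_list ks + 2 - int n)"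
proof (induction n arbitrary: ks vs)
  case 0 thus ?case by simp
next
  case (Suc m)
  have lk: "length ks = Suc m" using Suc.prems by (simp add: homog_def)
  have hv: "vs ! i \<in> V (ks ! i)" if "i < Suc m" for i using Suc.prems that by (simp add: homog_def)
  consider "m = 0" | "m = 1" | "2 \<le> m" by linarith
  thus ?case
  proof cases
    case 1
    then obtain k where k: "ks = [k]" using lk by (auto simp: length_Suc_conv)
    show ?thesis using d_deg[OF hv[of 0]] 1 k by (simp add: add.commute)
  next
    case 2
    have b: "br (vs!0) (vs!1) \<in> V (ks!0 + ks!1)" by (rule br_deg) (use hv 2 in auto)
    have "sum_list ks = ks!0 + ks!1" using lk 2
      by (cases ks; cases "tl ks") auto
    have x1: "d (eta (br (vs!0) (vs!1))) \<in> V (ks!0 + ks!1)" using d_deg[OF eta_deg[OF b]] by simp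
    have x2: "eta (d (br (vs!0) (vs!1))) \<in> V (ks!0 + ks!1)" using eta_deg[OF d_deg[OF b]] by simp
    thus ?thesis using 2 kmu_2 Vadd[OF x1 x2] \<open>sum_list ks = _\<close>
      by (simp add: numeral_2_eq_2)
  next
    case 3
    have lv: "length vs = Suc m" using Suc.prems by simp
    show ?thesis unfolding kmu_rec[OF 3 lk lv] eta_removal_sum_def diff_Suc_1
    proof (intro Vsigned Vsum)
      fix t assume t: "t \<in> {..<Suc m}"
      have IH: "mu m (remove_nth t ks) (remove_nth t vs) \<in> V (sum_list (remove_nth t ks) + 2 - int m)"
        by (rule Suc.IH) (use homog_remove_nth[OF Suc.prems(1)] t lv 3 in auto)
      have "eta (br (mu m (remove_nth t ks) (remove_nth t vs)) (vs ! t)) \<in> V (sum_list (remove_nth t ks) + 2 - int m + ks ! t - 1)"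
        by (rule eta_deg, rule br_deg[OF IH hv]) (use t in auto)
      moreover have "sum_list (remove_nth t ks) + 2 - int m + ks ! t - 1 = sum_list ks + 2 - int (Suc m)"
        using sum_list_remove_nth[of t ks] t lk by simp
      ultimately show "eta (br (mu m (remove_nth t ks) (remove_nth t vs)) (vs ! t)) \<in> V (sum_list ks + 2 - int (Suc m))"
        by simp
    qed
  qed
qed

lemma eta_removal_sum_linear:
  assumes IH: "\<And>ks vs j. length ks = m \<Longrightarrow> length vs = m \<Longrightarrow> j < m \<Longrightarrow>
      mu m ks (vs[j := sc a x + sc b y]) = sc a (mu m ks (vs[j := x])) + sc b (mu m ks (vs[j := y]))"
    and lk: "length ks = Suc m" and lv: "length vs = Suc m" and j: "j < Suc m"
  shows "eta_removal_sum (Suc m) ks (vs[j := sc a x + sc b y])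
    = sc a (eta_removal_sum (Suc m) ks (vs[j := x])) + sc b (eta_removal_sum (Suc m) ks (vs[j := y]))"
proof -
  define T where "T w t = signed (remove_exp ks t)
      (eta (br (mu m (remove_nth t ks) (remove_nth t (vs[j := w]))) (vs[j := w] ! t)))" for w t
  have "T (sc a x + sc b y) t = sc a (T x t) + sc b (T y t)" if t: "t < Suc m" for t
  proof (cases "t = j")
    case True
    then show ?thesis using remove_nth_list_update[of t vs j] t lv
      by (simp add: T_def br_add_right br_sc_right eta_add eta_sc signed_plus sc_signed)
  next
    case False
    define j' where "j' = (if t < j then j - 1 else j)"
    have r: "remove_nth t (vs[j := w]) = (remove_nth t vs)[j' := w]" for w
      using remove_nth_list_update[of t vs j] t j lv False by (simp add: j'_def)
    have "j' < m" using t j False by (auto simp: j'_def)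
    then have "mu m (remove_nth t ks) ((remove_nth t vs)[j' := sc a x + sc b y])
        = sc a (mu m (remove_nth t ks) ((remove_nth t vs)[j' := x]))
          + sc b (mu m (remove_nth t ks) ((remove_nth t vs)[j' := y]))"
      by (intro IH) (use t lk lv in auto)
    then show ?thesis using False
      by (simp add: T_def r br_add_left br_sc_left eta_add eta_sc signed_plus sc_signed)
  qed
  then show ?thesis
    by (simp add: eta_removal_sum_def T_def[symmetric] sum.distrib sc_sum del: sum.lessThan_Suc)
qed

lemma kmu_linear:
  "length ks = n \<Longrightarrow> length vs = n \<Longrightarrow> j < n \<Longrightarrow>
   mu n ks (vs[j := sc a x + sc b y]) = sc a (mu n ks (vs[j := x])) + sc b (mu n ks (vs[j := y]))"
proof (induction n arbitrary: ks vs j)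
  case 0 thus ?case by simp
next
  case (Suc m)
  consider "m = 0" | "m = 1" | "2 \<le> m" by linarith
  thus ?case
  proof cases
    case 1
    thus ?thesis using Suc.prems by (simp add: d_add d_sc)
  next
    case 2
    have "j = 0 \<or> j = 1" using Suc.prems 2 by auto
    thus ?thesis using Suc.prems 2
      by (auto simp: numeral_2_eq_2 d_add d_sc eta_add eta_sc br_add_left br_add_right br_sc_left br_sc_right sc_add nth_list_update add_ac)
  next
    case 3
    have "eta_removal_sum (Suc m) ks (vs[j := sc a x + sc b y])
        = sc a (eta_removal_sum (Suc m) ks (vs[j := x])) + sc b (eta_removal_sum (Suc m) ks (vs[j := y]))"
      by (rule eta_removal_sum_linear[OF Suc.IH]) (use Suc.prems in auto)
    then show ?thesis
      using Suc.prems by (simp add: kmu_rec[OF 3] signed_plus sc_signed del: kmu.simps)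
  qed
qed

lemma eta_removal_sum_swapadj:
  assumes IH: "\<And>ks vs j. homog V ks vs \<Longrightarrow> length vs = m \<Longrightarrow> Suc j < m \<Longrightarrow>
      mu m (swapadj ks j) (swapadj vs j) = signed (1 + ks!j * ks!Suc j) (mu m ks vs)"
    and h: "homog V ks vs" and lv: "length vs = Suc m" and j: "Suc j < Suc m"
  shows "eta_removal_sum (Suc m) (swapadj ks j) (swapadj vs j)
    = signed (1 + ks!j * ks!Suc j) (eta_removal_sum (Suc m) ks vs)"
proof -
  let ?c = "1 + ks!j * ks!Suc j"
  let ?\<tau> = "Transposition.transpose j (Suc j)"
  define f where "f ks' vs' t = signed (remove_exp ks' t)
      (eta (br (mu m (remove_nth t ks') (remove_nth t vs')) (vs' ! t)))" for ks' vs' t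
  have lk: "length ks = Suc m" using h lv by (simp add: homog_def)
  have jk: "Suc j < length ks" and jv: "Suc j < length vs" using j lk lv by auto
  have ff: "f (swapadj ks j) (swapadj vs j) t = signed ?c (f ks vs (?\<tau> t))" if t: "t < Suc m" for t
  proof -
    have tk: "t < length ks" and tv: "t < length vs" using t lk lv by auto
    consider "t = j" | "t = Suc j" | "t \<noteq> j" "t \<noteq> Suc j" by blast
    then show ?thesis
    proof cases
      case 1
      then show ?thesis
        using remove_nth_swapadj(2)[OF jk tk] remove_nth_swapadj(2)[OF jv tv] remove_exp_swapadj(2)[OF jk tk] jv
        by (simp add: f_def nth_swapadj signed_add)
    next
      case 2
      have eq: "remove_exp (swapadj ks j) (Suc j) - (?c + remove_exp ks j) = - 2 * ?c"
        by (subst remove_exp_swapadj(3)[OF jk tk, symmetric]) (simp add: algebra_simps)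
      have "even (remove_exp (swapadj ks j) (Suc j) - (?c + remove_exp ks j))"
        unfolding eq by simp
      then have e: "signed (remove_exp (swapadj ks j) (Suc j)) z = signed (?c + remove_exp ks j) z" for z :: 'v
        by (rule signed_cong)
      show ?thesis
        using remove_nth_swapadj(3)[OF jk tk] remove_nth_swapadj(3)[OF jv tv] 2 jv
        by (simp add: f_def nth_swapadj signed_add e)
    next
      case 3
      define j' where "j' = (if t < j then j - 1 else j)"
      have hr: "homog V (remove_nth t ks) (remove_nth t vs)"
        by (rule homog_remove_nth[OF h tv])
      have "mu m (swapadj (remove_nth t ks) j') (swapadj (remove_nth t vs) j')
          = signed (1 + remove_nth t ks ! j' * remove_nth t ks ! Suc j') (mu m (remove_nth t ks) (remove_nth t vs))"
        by (rule IH[OF hr]) (use 3 t lv j in \<open>auto simp: j'_def\<close>)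
      moreover have "remove_nth t ks ! j' = ks ! j" "remove_nth t ks ! Suc j' = ks ! Suc j"
        using 3 jk t lk by (auto simp: nth_remove_nth j'_def)
      ultimately show ?thesis
        using 3 remove_exp_swapadj(1)[OF jk tk 3] remove_nth_swapadj(1)[OF jk tk 3] remove_nth_swapadj(1)[OF jv tv 3]
          t lv jv
        by (simp add: f_def j'_def nth_swapadj br_signed_left eta_signed signed_signed add_ac)
    qed
  qed
  have tp: "?\<tau> permutes {..<Suc m}" using j by (intro permutes_swap_id) auto
  have "(\<Sum>t<Suc m. f (swapadj ks j) (swapadj vs j) t) = (\<Sum>t<Suc m. signed ?c (f ks vs (?\<tau> t)))"
    by (rule sum.cong) (simp_all add: ff)
  also have "\<dots> = (\<Sum>t<Suc m. signed ?c (f ks vs t))"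
    by (rule sum.reindex_bij_betw[OF permutes_imp_bij[OF tp]])
  finally show ?thesis
    by (simp add: eta_removal_sum_def f_def signed_sum del: sum.lessThan_Suc)
qed

lemma kmu_swapadj:
  "homog V ks vs \<Longrightarrow> length vs = n \<Longrightarrow> Suc j < n \<Longrightarrow>
   mu n (swapadj ks j) (swapadj vs j) = signed (1 + ks!j * ks!Suc j) (mu n ks vs)"
proof (induction n arbitrary: ks vs j)
  case 0 thus ?case by simp
next
  case (Suc m)
  have lk: "length ks = Suc m" and lv: "length vs = Suc m" using Suc.prems by (auto simp: homog_def)
  have hv: "vs ! i \<in> V (ks ! i)" if "i < Suc m" for i using Suc.prems that by (simp add: homog_def)
  consider "m = 1" | "2 \<le> m" using Suc.prems by linarith
  thus ?case
  proof cases
    case 1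
    hence j: "j = 0" using Suc.prems by simp
    have e: "br (vs!1) (vs!0) = signed (1 + ks!0 * ks!1) (br (vs!0) (vs!1))"
      using br_swap[OF hv[of 1] hv[of 0]] 1 by (simp add: mult.commute)
    show ?thesis using 1 j lk lv e
      by (simp add: numeral_2_eq_2 nth_swapadj d_signed eta_signed signed_plus)
  next
    case 2
    have "eta_removal_sum (Suc m) (swapadj ks j) (swapadj vs j)
        = signed (1 + ks!j * ks!Suc j) (eta_removal_sum (Suc m) ks vs)"
      by (rule eta_removal_sum_swapadj[OF Suc.IH]) (use Suc.prems in auto)
    then show ?thesis
      using lk lv by (simp add: kmu_rec[OF 2] signed_signed add.commute del: kmu.simps)
  qed
qed

abbreviation "Mu \<equiv> kur_mu sc d br eta"

lemma Mu_graded_multilin: "graded_multilin sc V V (\<lambda>k. 2 - int k) Mu"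
  unfolding graded_multilin_def
proof (intro allI impI conjI ballI)
  fix ks vs assume a: "homog V ks vs \<and> 1 \<le> length vs"
  hence h: "homog V ks vs" and n1: "1 \<le> length vs" by auto
  have lk: "length ks = length vs" using h by (simp add: homog_def)
  show "Mu ks vs \<in> V (sum_list ks + (2 - int (length vs)))"
    using kmu_deg[OF h refl n1] by (simp add: kur_mu_def add_diff_eq)
  fix j x y assume j: "j < length vs"
  show "Mu ks (vs[j := x + y]) = Mu ks (vs[j := x]) + Mu ks (vs[j := y])"
    using kmu_linear[OF lk refl j, of 1 x 1 y] by (simp add: kur_mu_def sc_one)
next
  fix ks vs j c x assume a: "homog V ks vs \<and> 1 \<le> length vs" and j: "j < length vs"
  have lk: "length ks = length vs" using a by (simp add: homog_def)
  show "Mu ks (vs[j := sc c x]) = sc c (Mu ks (vs[j := x]))"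
    using kmu_linear[OF lk refl j, of c x 0 x] by (simp add: kur_mu_def sc_zero_left)
next
  fix ks vs j assume a: "homog V ks vs \<and> 1 \<le> length vs" and j: "Suc j < length vs"
  show "Mu (swapadj ks j) (swapadj vs j) = - sc (of_int (ksign (ks ! j) (ks ! Suc j))) (Mu ks vs)"
    using kmu_swapadj[of ks vs "length vs" j] a j by (simp add: kur_mu_def minus_sc_ksign)
qed

section \<open>The decomposition of the brackets\<close>

definition d_eta_bracket :: "nat \<Rightarrow> 'v list \<Rightarrow> 'v" where
  "d_eta_bracket m vs = (if m = 2 then d (eta (br (vs ! 0) (vs ! 1))) else 0)"

(* For m = 2 this is the Leibniz rule combined with graded antisymmetry. *)
lemma kmu_decompose:
  assumes m: "2 \<le> m" and h: "homog V ks vs" and lv: "length vs = m"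
  shows "mu m ks vs = d_eta_bracket m vs - signed (int m - 1) (eta_removal_sum m ks vs)"
proof (cases "m = 2")
  case False
  define m' where "m' = m - 1"
  have m': "m = Suc m'" "2 \<le> m'" using m False by (auto simp: m'_def)
  have lk: "length ks = Suc m'" using h lv m' by (simp add: homog_def)
  have lv': "length vs = Suc m'" using lv m' by simp
  have "mu m ks vs = signed (int (Suc m')) (eta_removal_sum m ks vs)"
    unfolding m'(1) by (rule kmu_rec[OF m'(2) lk lv'])
  also have "\<dots> = - signed (int m - 1) (eta_removal_sum m ks vs)"
    by (subst signed_eq_minus_signed_succ) (rule arg_cong[where f=uminus], rule signed_cong, simp add: m'(1))
  finally show ?thesis using False by (simp add: d_eta_bracket_def)
next
  case True
  have lk: "length ks = 2" using h lv True by (simp add: homog_def)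
  have hv: "vs ! i \<in> V (ks ! i)" if "i < 2" for i using h that lv True by (simp add: homog_def)
  obtain a0 a1 where va: "vs = [a0, a1]" using lv True by (metis One_nat_def length_0_conv length_Suc_conv numeral_2_eq_2)
  obtain k0 k1 where ka: "ks = [k0, k1]" using lk by (metis One_nat_def length_0_conv length_Suc_conv numeral_2_eq_2)
  have r0: "remove_nth 0 vs = [vs ! 1]" "remove_nth 1 vs = [vs ! 0]" "remove_nth 0 ks = [ks ! 1]" "remove_nth 1 ks = [ks ! 0]"
    using va ka by (simp_all add: remove_nth_def)
  have i1: "{0<..<2::nat} = {1}" by auto
  have i2: "{1<..<2::nat} = {}" by auto
  have e0: "remove_exp ks 0 = 1 + ks!0 * ks!1" and e1: "remove_exp ks 1 = 0"
    using ka by (simp_all add: remove_exp_def i1 i2)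
  have Rs2: "eta_removal_sum 2 ks vs = signed (1 + ks!0 * ks!1) (eta (br (d (vs ! 1)) (vs ! 0))) + eta (br (d (vs ! 0)) (vs ! 1))"
    unfolding eta_removal_sum_def using r0 e0 e1 by (simp add: numeral_2_eq_2)
  have "d (br (vs!0) (vs!1)) = br (d (vs!0)) (vs!1) + signed (ks!0) (br (vs!0) (d (vs!1)))"
    by (rule d_br[OF hv]) simp
  also have "br (vs!0) (d (vs!1)) = signed (1 + ks!0 * (ks!1 + 1)) (br (d (vs!1)) (vs!0))"
    by (rule br_swap[OF hv d_deg[OF hv]]) simp_all
  also have "signed (ks!0) (signed (1 + ks!0 * (ks!1 + 1)) (br (d (vs!1)) (vs!0))) = signed (1 + ks!0 * ks!1) (br (d (vs!1)) (vs!0))"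
    by (subst signed_signed, rule signed_cong) (simp add: algebra_simps)
  finally have "d (br (vs!0) (vs!1)) = br (d (vs!0)) (vs!1) + signed (1 + ks!0 * ks!1) (br (d (vs!1)) (vs!0))" .
  thus ?thesis using True Rs2
    by (simp add: kmu_2 d_eta_bracket_def eta_add eta_signed add.commute)
qed

lemma eta_removal_sum_Cons:
  assumes l: "length ks = l" "length xs = l"
  shows "eta_removal_sum (Suc l) (c # ks) (w # xs) = signed (\<Sum>p<l. 1 + c * ks ! p) (eta (br (mu l ks xs) w))
     + (\<Sum>p<l. signed (remove_exp ks p) (eta (br (mu l (c # remove_nth p ks) (w # remove_nth p xs)) (xs ! p))))"
  unfolding eta_removal_sum_def sum.lessThan_Suc_shift
  by (simp add: remove_exp_Cons_0 remove_exp_Cons_Suc l)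

lemma kmu_Cons_decompose:
  assumes h: "homog V (c # ks) (w # xs)" and l: "length xs = l" and l1: "1 \<le> l"
  shows "mu (Suc l) (c # ks) (w # xs) = d_eta_bracket (Suc l) (w # xs)
    - signed (int l) (signed (\<Sum>p<l. 1 + c * ks ! p) (eta (br (mu l ks xs) w))
      + (\<Sum>p<l. signed (remove_exp ks p) (eta (br (mu l (c # remove_nth p ks) (w # remove_nth p xs)) (xs ! p)))))"
proof -
  have lk: "length ks = l" using h l by (simp add: homog_def)
  show ?thesis
    using kmu_decompose[OF _ h] eta_removal_sum_Cons[OF lk l] l l1 by simp
qed

section \<open>The L-infinity relations\<close>

definition eta_pair_term :: "nat \<Rightarrow> int list \<Rightarrow> 'v list \<Rightarrow> nat set \<Rightarrow> 'v" where
  "eta_pair_term n ks vs S = signed (unshuffle_exp ks S + int (card S * (n - card S)) + int (n - card S)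
        + (\<Sum>p<n - card S. 1 + (sum_list (sublist_at ks S) + 2 - int (card S)) * sublist_at ks ({..<n} - S) ! p))
     (eta (br (mu (n - card S) (sublist_at ks ({..<n} - S)) (sublist_at vs ({..<n} - S))) (mu (card S) (sublist_at ks S) (sublist_at vs S))))"

(* Graded antisymmetry of the bracket, with exponents of opposite parity by unshuffle_exp_compl. *)
lemma eta_pair_term_compl:
  assumes h: "homog V ks vs" and lv: "length vs = n" and S: "S \<subseteq> {..<n}" "0 < card S" "card S < n"
  shows "eta_pair_term n ks vs ({..<n} - S) = - eta_pair_term n ks vs S"
proof -
  define T where "T = {..<n} - S"
  define k where "k = card S"
  have lk: "length ks = n" using h lv by (simp add: homog_def)
  have fS: "finite S" "finite T" using S by (auto simp: T_def intro: finite_subset)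
  have cT: "card T = n - k" using S fS by (simp add: T_def k_def card_Diff_subset)
  have TS: "{..<n} - T = S" using S by (auto simp: T_def)
  have Tsub: "T \<subseteq> {..<n}" by (auto simp: T_def)
  have nk: "n - (n - k) = k" using S by (simp add: k_def)
  define KS where "KS = sum_list (sublist_at ks S)"
  define KT where "KT = sum_list (sublist_at ks T)"
  define dS where "dS = KS + 2 - int k"
  define dT where "dT = KT + 2 - int (n - k)"
  define muS where "muS = mu k (sublist_at ks S) (sublist_at vs S)"
  define muT where "muT = mu (n - k) (sublist_at ks T) (sublist_at vs T)"
  have hS: "homog V (sublist_at ks S) (sublist_at vs S)" by (rule homog_sublist_at[OF h]) (use S lv in auto)
  have hT: "homog V (sublist_at ks T) (sublist_at vs T)" by (rule homog_sublist_at[OF h]) (use Tsub lv in auto)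
  have dgS: "muS \<in> V dS" unfolding muS_def dS_def KS_def
    by (rule kmu_deg[OF hS]) (use fS S in \<open>auto simp: k_def\<close>)
  have dgT: "muT \<in> V dT" unfolding muT_def dT_def KT_def
    by (rule kmu_deg[OF hT]) (use fS cT S in \<open>auto simp: k_def\<close>)
  have E0S: "(\<Sum>p<n - k. 1 + dS * sublist_at ks T ! p) = int (n - k) + dS * KT"
    using sum_one_plus_mult_nth[of dS "sublist_at ks T"] fS cT by (simp add: KT_def)
  have E0T: "(\<Sum>p<k. 1 + dT * sublist_at ks S ! p) = int k + dT * KS"
    using sum_one_plus_mult_nth[of dT "sublist_at ks S"] fS by (simp add: KS_def k_def)
  have comp: "unshuffle_exp ks S + unshuffle_exp ks T = int k * int (n - k) + KS * KT"
    using unshuffle_exp_compl[of S ks] S lk fS cT by (simp add: T_def KS_def KT_def sum_list_sublist_at k_def)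
  have FS: "eta_pair_term n ks vs S = signed (unshuffle_exp ks S + int k * int (n - k) + int (n - k) + (int (n - k) + dS * KT)) (eta (br muT muS))"
    unfolding eta_pair_term_def k_def[symmetric] T_def[symmetric] using E0S
    by (simp add: muS_def muT_def dS_def KS_def)
  have "eta_pair_term n ks vs T = signed (unshuffle_exp ks T + int (n - k) * int k + int k + (int k + dT * KS)) (eta (br muS muT))"
    unfolding eta_pair_term_def cT nk TS using E0T
    by (simp add: muS_def muT_def dT_def KT_def mult.commute)
  also have "br muS muT = signed (1 + dS * dT) (br muT muS)" by (rule br_swap[OF dgS dgT])
  finally have FT: "eta_pair_term n ks vs T = signed (unshuffle_exp ks T + int (n - k) * int k + int k + (int k + dT * KS) + (1 + dS * dT)) (eta (br muT muS))"
    by (simp add: eta_signed signed_signed)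
  have X: "unshuffle_exp ks S = int k * int (n - k) + KS * KT - unshuffle_exp ks T" using comp by simp
  have eqo: "(unshuffle_exp ks S + int k * int (n - k) + int (n - k) + (int (n - k) + dS * KT))
      - (unshuffle_exp ks T + int (n - k) * int k + int k + (int k + dT * KS) + (1 + dS * dT))
      = 2 * (- unshuffle_exp ks T + 2 * int (n - k) - 3 - 2 * KS + int (n - k) * KS) + 1"
    unfolding X dS_def dT_def by (simp add: algebra_simps)
  hence "odd ((unshuffle_exp ks S + int k * int (n - k) + int (n - k) + (int (n - k) + dS * KT))
      - (unshuffle_exp ks T + int (n - k) * int k + int k + (int k + dT * KS) + (1 + dS * dT)))"
    by (subst eqo) simp
  from signed_opposite_cancel[OF this] have "eta_pair_term n ks vs S + eta_pair_term n ks vs T = 0" unfolding FS FT .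
  thus ?thesis by (simp add: T_def eq_neg_iff_add_eq_0 add.commute)
qed

lemma sum_eta_pair_terms_zero:
  assumes h: "homog V ks vs" and lv: "length vs = n"
  shows "(\<Sum>k\<in>{1..n-1}. \<Sum>S\<in>k_subsets n k. eta_pair_term n ks vs S) = 0"
proof -
  define Q where "Q = (\<Union>k\<in>{1..n-1}. k_subsets n k)"
  have L: "(\<Sum>k\<in>{1..n-1}. \<Sum>S\<in>k_subsets n k. eta_pair_term n ks vs S) = (\<Sum>S\<in>Q. eta_pair_term n ks vs S)"
    unfolding Q_def by (rule sum.UNION_disjoint[symmetric]) (auto simp: finite_k_subsets k_subsets_def)
  have Qc: "S \<in> Q \<longleftrightarrow> S \<subseteq> {..<n} \<and> 0 < card S \<and> card S < n" for S
    by (auto simp: Q_def k_subsets_def)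
  have inv: "\<forall>S\<in>Q. {..<n} - ({..<n} - S) = S" using Qc by auto
  have into: "(\<lambda>S. {..<n} - S) ` Q \<subseteq> Q"
  proof
    fix X assume "X \<in> (\<lambda>S. {..<n} - S) ` Q"
    then obtain S where S: "S \<in> Q" "X = {..<n} - S" by auto
    have "finite S" using S Qc finite_subset by blast
    hence "card X = n - card S" using S Qc by (simp add: card_Diff_subset)
    thus "X \<in> Q" using S Qc by auto
  qed
  have bij: "bij_betw (\<lambda>S. {..<n} - S) Q Q"
    by (rule bij_betw_byWitness[OF inv inv into into])
  have "(\<Sum>S\<in>Q. eta_pair_term n ks vs S) = (\<Sum>S\<in>Q. eta_pair_term n ks vs ({..<n} - S))"
    by (rule sum.reindex_bij_betw[OF bij, symmetric])
  also have "\<dots> = (\<Sum>S\<in>Q. - eta_pair_term n ks vs S)"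
    by (rule sum.cong[OF refl]) (use Qc eta_pair_term_compl[OF h lv] in auto)
  also have "\<dots> = - (\<Sum>S\<in>Q. eta_pair_term n ks vs S)" by (simp add: sum_negf)
  finally have "(\<Sum>S\<in>Q. eta_pair_term n ks vs S) = 0" by (rule eq_neg_self_imp_zero[OF vector_space_sc])
  thus ?thesis using L by simp
qed

definition nested_term :: "nat \<Rightarrow> int list \<Rightarrow> 'v list \<Rightarrow> nat set \<Rightarrow> nat \<Rightarrow> 'v" where
  "nested_term n ks vs S t = signed (unshuffle_exp ks S + int (card S * (n - card S)) + int (n - card S)
       + (\<Sum>j\<in>{j\<in>{..<n} - S. t < j}. 1 + ks!t * ks!j))
     (eta (br (mu (n - card S) ((sum_list (sublist_at ks S) + 2 - int (card S)) # sublist_at ks ({..<n} - S - {t}))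
                 (mu (card S) (sublist_at ks S) (sublist_at vs S) # sublist_at vs ({..<n} - S - {t}))) (vs ! t)))"

lemma sum_nested_terms_reindex:
  assumes S: "S \<in> k_subsets n k" and lk: "length ks = n"
  shows "(\<Sum>p<n-k. signed (unshuffle_exp ks S + int (k*(n-k)) + int (n-k) + remove_exp (sublist_at ks ({..<n}-S)) p)
      (eta (br (mu (n-k) ((sum_list (sublist_at ks S) + 2 - int k) # remove_nth p (sublist_at ks ({..<n}-S)))
                         (mu k (sublist_at ks S) (sublist_at vs S) # remove_nth p (sublist_at vs ({..<n}-S))))
               (sublist_at vs ({..<n}-S) ! p))))
    = (\<Sum>t\<in>{..<n} - S. nested_term n ks vs S t)"
proof -
  define T where "T = {..<n} - S"
  define L where "L = sorted_list_of_set T"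
  have fS: "finite S" "S \<subseteq> {..<n}" "card S = k" using S by (auto simp: k_subsets_def intro: finite_subset)
  have fT: "finite T" by (simp add: T_def)
  have cT: "card T = n - k" using fS by (simp add: T_def card_Diff_subset)
  have bij: "bij_betw ((!) L) {..<n-k} T"
    by (rule bij_betw_nth) (use fT cT in \<open>auto simp: L_def\<close>)
  have "(\<Sum>p<n-k. signed (unshuffle_exp ks S + int (k*(n-k)) + int (n-k) + remove_exp (sublist_at ks T) p)
      (eta (br (mu (n-k) ((sum_list (sublist_at ks S) + 2 - int k) # remove_nth p (sublist_at ks T))
                         (mu k (sublist_at ks S) (sublist_at vs S) # remove_nth p (sublist_at vs T)))
               (sublist_at vs T ! p))))
      = (\<Sum>p<n-k. nested_term n ks vs S (L ! p))"
  proof (rule sum.cong[OF refl])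
    fix p assume p: "p \<in> {..<n-k}"
    hence p': "p < card T" using cT by simp
    show "signed (unshuffle_exp ks S + int (k*(n-k)) + int (n-k) + remove_exp (sublist_at ks T) p)
      (eta (br (mu (n-k) ((sum_list (sublist_at ks S) + 2 - int k) # remove_nth p (sublist_at ks T))
                         (mu k (sublist_at ks S) (sublist_at vs S) # remove_nth p (sublist_at vs T)))
               (sublist_at vs T ! p))) = nested_term n ks vs S (L ! p)"
      unfolding nested_term_def T_def[symmetric] fS(3) L_def
      using remove_nth_sublist_at[OF fT p', of ks] remove_nth_sublist_at[OF fT p', of vs] remove_exp_sublist_at[OF fT p', of ks] nth_sublist_at[OF fT p', of vs]
      by simp
  qed
  also have "\<dots> = (\<Sum>t\<in>T. nested_term n ks vs S t)"
    by (rule sum.reindex_bij_betw[OF bij])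
  finally show ?thesis by (simp add: T_def)
qed

lemma nested_term_skip:
  assumes h: "homog V ks vs" and lv: "length vs = n" and n: "n = Suc N" and t: "t < n" and S': "S' \<in> k_subsets N k"
    and k: "k \<in> {1..N}"
  shows "nested_term n ks vs (skip t ` S') t
    = signed (remove_exp ks t + int n) (eta (br (linf_term Mu Mu (remove_nth t ks) (remove_nth t vs) k S') (vs ! t)))"
proof -
  have lk: "length ks = n" using h lv by (simp add: homog_def)
  define S where "S = skip t ` S'"
  have fS': "finite S'" "S' \<subseteq> {..<N}" "card S' = k" using S' by (auto simp: k_subsets_def intro: finite_subset)
  have cS: "card S = k" unfolding S_def using fS' by (simp add: card_image inj_on_subset[OF inj_skip])
  have sub1: "S' \<subseteq> {..<length ks - 1}" "S' \<subseteq> {..<length vs - 1}" using fS' lk lv n by auto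
  have sub2: "{..<N} - S' \<subseteq> {..<length ks - 1}" "{..<N} - S' \<subseteq> {..<length vs - 1}" using lk lv n by auto
  have tl: "t < length ks" "t < length vs" using t lk lv by auto
  have cmp: "{..<n} - S - {t} = skip t ` ({..<N} - S')" unfolding S_def
    using skip_image_compl[OF t] fS' n by simp
  have sel1: "sublist_at (remove_nth t ks) S' = sublist_at ks S" "sublist_at (remove_nth t vs) S' = sublist_at vs S"
    unfolding S_def by (rule sublist_at_remove_nth[OF sub1(1) tl(1)], rule sublist_at_remove_nth[OF sub1(2) tl(2)])
  have sel2: "sublist_at (remove_nth t ks) ({..<N} - S') = sublist_at ks ({..<n} - S - {t})"
             "sublist_at (remove_nth t vs) ({..<N} - S') = sublist_at vs ({..<n} - S - {t})"
    unfolding cmp by (rule sublist_at_remove_nth[OF sub2(1) tl(1)], rule sublist_at_remove_nth[OF sub2(2) tl(2)])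
  have len2: "length (mu k (sublist_at ks S) (sublist_at vs S) # sublist_at (remove_nth t vs) ({..<N} - S')) = n - k"
    using fS' n k by (simp add: card_Diff_subset Suc_diff_le)
  have exps: "unshuffle_exp ks S + (\<Sum>j\<in>{j\<in>{..<n} - S. t < j}. 1 + ks!t * ks!j)
      = remove_exp ks t + unshuffle_exp (remove_nth t ks) S'"
    unfolding S_def using unshuffle_exp_skip_remove_exp[OF tl(1) sub1(1)] lk by simp
  have ar: "int (k * (n - k)) + int (n - k) = int n + int (k * (N - k))"
  proof -
    have "n - k = Suc (N - k)" using n k by auto
    hence "k * (n - k) = k * (N - k) + k" by simp
    moreover have "(n - k) + k = n" using n k by auto
    ultimately show ?thesis by linarith
  qed
  have ex: "unshuffle_exp ks S + int (k * (n - k)) + int (n - k) + (\<Sum>j\<in>{j\<in>{..<n} - S. t < j}. 1 + ks!t * ks!j)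
     = (remove_exp ks t + int n) + (unshuffle_exp (remove_nth t ks) S' + int (k * (N - k)))"
    using exps ar by linarith
  have len1': "length (sublist_at vs S) = k" using cS fS' S_def by simp
  have len2': "length (mu k (sublist_at ks S) (sublist_at vs S) # sublist_at vs ({..<n} - S - {t})) = n - k"
    using len2 unfolding sel1 sel2 .
  have lr: "length (remove_nth t vs) = N" using tl n lv by simp
  show ?thesis
    unfolding nested_term_def linf_term_def lr S_def[symmetric] cS kur_mu_def sel1 sel2 len1' len2'
    by (simp only: ex br_signed_left eta_signed signed_signed)
qed

lemma sum_nested_terms_zero:
  assumes h: "homog V ks vs" and lv: "length vs = n" and n: "n = Suc N"
    and IH: "\<And>ks' vs'. homog V ks' vs' \<Longrightarrow> length vs' = N \<Longrightarrow> linf_sum sc Mu Mu ks' vs' = 0"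
  shows "(\<Sum>k\<in>{1..N}. \<Sum>S\<in>k_subsets n k. \<Sum>t\<in>{..<n} - S. nested_term n ks vs S t) = 0"
proof -
  have "(\<Sum>k\<in>{1..N}. \<Sum>S\<in>{S\<in>k_subsets n k. t \<notin> S}. nested_term n ks vs S t) = 0"
    if t: "t < n" for t
  proof -
    have hr: "homog V (remove_nth t ks) (remove_nth t vs)"
      by (rule homog_remove_nth[OF h]) (use t lv in simp)
    have lr: "length (remove_nth t vs) = N" using t lv n by simp
    have lkr: "length (remove_nth t ks) = length (remove_nth t vs)"
      using hr by (simp add: homog_def)
    have "(\<Sum>k\<in>{1..N}. \<Sum>S\<in>{S\<in>k_subsets n k. t \<notin> S}. nested_term n ks vs S t)
        = (\<Sum>k\<in>{1..N}. \<Sum>S'\<in>k_subsets N k. nested_term n ks vs (skip t ` S') t)"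
      using sum.reindex_bij_betw[OF bij_betw_skip_k_subsets[OF t], of "\<lambda>S. nested_term n ks vs S t"] n
      by simp
    also have "\<dots> = (\<Sum>k\<in>{1..N}. \<Sum>S'\<in>k_subsets N k. signed (remove_exp ks t + int n)
        (eta (br (linf_term Mu Mu (remove_nth t ks) (remove_nth t vs) k S') (vs ! t))))"
      by (intro sum.cong refl nested_term_skip[OF h lv n t]) auto
    also have "\<dots> = signed (remove_exp ks t + int n)
        (eta (br (linf_sum sc Mu Mu (remove_nth t ks) (remove_nth t vs)) (vs ! t)))"
      unfolding linf_sum_eq_sum_k_subsets[OF vector_space_sc lkr] lr
      by (simp only: br_sum_left eta_sum signed_sum)
    also have "\<dots> = 0" using IH[OF hr lr] by simp
    finally show ?thesis .
  qed
  then show ?thesis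
    by (simp add: sum_k_subsets_compl_swap)
qed

lemma sum_k_subsets_pred_eta_br:
  assumes h: "homog V ks vs" and lv: "length vs = Suc N"
  shows "(\<Sum>S\<in>k_subsets (Suc N) N. signed (unshuffle_exp ks S + int N)
      (eta (br (mu N (sublist_at ks S) (sublist_at vs S)) (sublist_at vs ({..<Suc N} - S) ! 0))))
    = signed (int N) (eta_removal_sum (Suc N) ks vs)"
proof -
  have lk: "length ks = Suc N" using h lv by (simp add: homog_def)
  show ?thesis
    using sum_k_subsets_pred_eq_sum_remove[OF lk lv, of "\<lambda>e a b c. signed (e + int N) (eta (br (mu N a b) c))"]
    by (simp add: eta_removal_sum_def signed_sum signed_signed add.commute del: sum.lessThan_Suc)
qed

lemma sum_k_subsets_d_eta_bracket:
  assumes h: "homog V ks vs" and lv: "length vs = n" and n: "n = Suc N" and N: "1 \<le> N"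
  shows "(\<Sum>k\<in>{1..N}. \<Sum>S\<in>k_subsets n k. signed (unshuffle_exp ks S + int (k * (n - k)))
            (d_eta_bracket (Suc (n - k)) (mu k (sublist_at ks S) (sublist_at vs S) # sublist_at vs ({..<n} - S))))
    = d (signed (int N) (eta_removal_sum n ks vs))"
proof -
  have "(\<Sum>k\<in>{1..N}. \<Sum>S\<in>k_subsets n k. signed (unshuffle_exp ks S + int (k * (n - k)))
            (d_eta_bracket (Suc (n - k)) (mu k (sublist_at ks S) (sublist_at vs S) # sublist_at vs ({..<n} - S))))
    = (\<Sum>k\<in>{1..N}. if k = N then \<Sum>S\<in>k_subsets n N. d (signed (unshuffle_exp ks S + int (N * (n - N)))
            (eta (br (mu N (sublist_at ks S) (sublist_at vs S)) (sublist_at vs ({..<n} - S) ! 0)))) else 0)"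
    using n by (intro sum.cong refl) (auto simp: d_eta_bracket_def d_signed Suc_diff_le)
  also have "\<dots> = d (signed (int N) (eta_removal_sum n ks vs))"
    using n N sum_k_subsets_pred_eta_br[OF h lv[unfolded n]] by (simp add: d_sum[symmetric])
  finally show ?thesis .
qed

lemma d_kmu:
  assumes "2 \<le> n" and "homog V ks vs" and "length vs = n"
  shows "d (mu n ks vs) = - d (signed (int n - 1) (eta_removal_sum n ks vs))"
  using kmu_decompose[OF assms] by (simp add: d_diff d_eta_bracket_def)

(* The omitted argument of the outer bracket is either mu_k(v_S) or some v_t with t outside S. *)
lemma Mu_linf_term_split:
  assumes h: "homog V ks vs" and lv: "length vs = n" and n: "n = Suc N" and k: "k \<in> {1..N}"
    and S: "S \<in> k_subsets n k"
  shows "linf_term Mu Mu ks vs k S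
    = signed (unshuffle_exp ks S + int (k * (n - k)))
        (d_eta_bracket (Suc (n - k)) (mu k (sublist_at ks S) (sublist_at vs S) # sublist_at vs ({..<n} - S)))
      - eta_pair_term n ks vs S - (\<Sum>t\<in>{..<n} - S. nested_term n ks vs S t)"
proof -
  define T where "T = {..<n} - S"
  define e where "e = unshuffle_exp ks S + int (k*(n-k))"
  define c where "c = sum_list (sublist_at ks S) + 2 - int k"
  define w where "w = mu k (sublist_at ks S) (sublist_at vs S)"
  have lk: "length ks = n" using h lv by (simp add: homog_def)
  have fS: "finite S" "S \<subseteq> {..<n}" "card S = k" using S by (auto simp: k_subsets_def intro: finite_subset)
  have lT: "length (sublist_at vs T) = n - k" using fS by (simp add: T_def card_Diff_subset)
  have hS: "homog V (sublist_at ks S) (sublist_at vs S)" by (rule homog_sublist_at[OF h]) (use fS lv in auto)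
  have hT: "homog V (sublist_at ks T) (sublist_at vs T)" by (rule homog_sublist_at[OF h]) (use lv in \<open>auto simp: T_def\<close>)
  have "w \<in> V c" unfolding w_def c_def by (rule kmu_deg[OF hS]) (use fS k in auto)
  then have hL: "homog V (c # sublist_at ks T) (w # sublist_at vs T)"
    using hT by (auto simp: homog_def nth_Cons split: nat.split)
  have linf: "linf_term Mu Mu ks vs k S = signed e (mu (Suc (n - k)) (c # sublist_at ks T) (w # sublist_at vs T))"
    using fS lT by (simp add: linf_term_def lv kur_mu_def T_def e_def c_def w_def)
  have D: "signed e (signed (int (n - k)) (signed (\<Sum>p<n-k. 1 + c * sublist_at ks T ! p)
      (eta (br (mu (n-k) (sublist_at ks T) (sublist_at vs T)) w)))) = eta_pair_term n ks vs S"
    by (simp add: eta_pair_term_def fS signed_signed add.assoc e_def c_def w_def T_def)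
  have "signed e (signed (int (n - k)) (\<Sum>p<n-k. signed (remove_exp (sublist_at ks T) p)
        (eta (br (mu (n-k) (c # remove_nth p (sublist_at ks T)) (w # remove_nth p (sublist_at vs T))) (sublist_at vs T ! p)))))
      = (\<Sum>p<n-k. signed (e + int (n - k) + remove_exp (sublist_at ks T) p)
        (eta (br (mu (n-k) (c # remove_nth p (sublist_at ks T)) (w # remove_nth p (sublist_at vs T))) (sublist_at vs T ! p))))"
    by (simp only: signed_sum signed_signed add.assoc)
  also have "\<dots> = (\<Sum>t\<in>T. nested_term n ks vs S t)"
    using sum_nested_terms_reindex[OF S lk] by (simp only: e_def c_def w_def T_def)
  finally have C: "signed e (signed (int (n - k)) (\<Sum>p<n-k. signed (remove_exp (sublist_at ks T) p)
        (eta (br (mu (n-k) (c # remove_nth p (sublist_at ks T)) (w # remove_nth p (sublist_at vs T))) (sublist_at vs T ! p)))))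
      = (\<Sum>t\<in>T. nested_term n ks vs S t)" .
  have nk: "1 \<le> n - k" using n k by auto
  show ?thesis
    unfolding linf kmu_Cons_decompose[OF hL lT nk] T_def[symmetric] e_def[symmetric] w_def[symmetric]
    by (simp add: signed_diff signed_plus D[symmetric] C[symmetric])
qed

lemma Mu_linf_relation:
  "homog V ks vs \<Longrightarrow> length vs = n \<Longrightarrow> 1 \<le> n \<Longrightarrow> linf_sum sc Mu Mu ks vs = 0"
proof (induction n arbitrary: ks vs)
  case 0 thus ?case by simp
next
  case (Suc N)
  note h = Suc.prems(1) and lv = Suc.prems(2)
  have lk: "length ks = length vs" using h by (simp add: homog_def)
  have split: "linf_sum sc Mu Mu ks vs
      = (\<Sum>k\<in>{1..N}. \<Sum>S\<in>k_subsets (Suc N) k. linf_term Mu Mu ks vs k S) + d (mu (Suc N) ks vs)"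
    using sum_k_subsets_all_linf_term[OF lk, of Mu Mu]
    by (simp add: linf_sum_eq_sum_k_subsets[OF vector_space_sc lk] lv kur_mu_def)
  show ?case
  proof (cases "N = 0")
    case True
    then show ?thesis using split by simp
  next
    case False
    have IH: "\<And>ks' vs'. homog V ks' vs' \<Longrightarrow> length vs' = N \<Longrightarrow> linf_sum sc Mu Mu ks' vs' = 0"
      using Suc.IH False by simp
    have "(\<Sum>k\<in>{1..N}. \<Sum>S\<in>k_subsets (Suc N) k. linf_term Mu Mu ks vs k S)
      = (\<Sum>k\<in>{1..N}. \<Sum>S\<in>k_subsets (Suc N) k. signed (unshuffle_exp ks S + int (k * (Suc N - k)))
          (d_eta_bracket (Suc (Suc N - k)) (mu k (sublist_at ks S) (sublist_at vs S) # sublist_at vs ({..<Suc N} - S))))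
        - (\<Sum>k\<in>{1..N}. \<Sum>S\<in>k_subsets (Suc N) k. eta_pair_term (Suc N) ks vs S)
        - (\<Sum>k\<in>{1..N}. \<Sum>S\<in>k_subsets (Suc N) k. \<Sum>t\<in>{..<Suc N} - S. nested_term (Suc N) ks vs S t)"
      by (simp add: Mu_linf_term_split[OF h lv refl] sum_subtractf)
    also have "\<dots> = d (signed (int N) (eta_removal_sum (Suc N) ks vs))"
      using sum_k_subsets_d_eta_bracket[OF h lv refl] False sum_eta_pair_terms_zero[OF h lv]
        sum_nested_terms_zero[OF h lv refl IH]
      by simp
    also have "\<dots> = - d (mu (Suc N) ks vs)"
      using d_kmu[of "Suc N"] False h lv by simp
    finally show ?thesis using split by simp
  qed
qed

lemma Linf_algebra_Mu: "Linf_algebra sc V Mu"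
  unfolding Linf_algebra_def using graded Mu_graded_multilin Mu_linf_relation by blast

section \<open>The Kuranishi morphism\<close>

lemma kuranishi_deg:
  assumes h: "homog V ks vs"
  shows "kuranishi br eta ks vs \<in> V (sum_list ks + (1 - int (length vs)))"
proof -
  have lk: "length ks = length vs" using h by (simp add: homog_def)
  have hv: "vs ! i \<in> V (ks ! i)" if "i < length vs" for i using h that by (simp add: homog_def)
  consider "length vs = 1" | "length vs = 2" | "length vs \<noteq> 1" "length vs \<noteq> 2" by blast
  then show ?thesis
  proof cases
    case 1
    then obtain k0 where "ks = [k0]" using lk by (metis One_nat_def length_0_conv length_Suc_conv)
    then show ?thesis using 1 hv[of 0] by (simp add: kuranishi_def)
  next
    case 2
    then obtain k0 k1 where k: "ks = [k0, k1]" using lk by (metis One_nat_def length_0_conv length_Suc_conv numeral_2_eq_2)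
    have "eta (br (vs!0) (vs!1)) \<in> V (ks!0 + ks!1 - 1)" by (rule eta_deg, rule br_deg) (use hv 2 in auto)
    then show ?thesis using 2 k by (simp add: kuranishi_def)
  next
    case 3 then show ?thesis by (simp add: kuranishi_def)
  qed
qed

lemma kuranishi_graded_multilin: "graded_multilin sc V V (\<lambda>n. 1 - int n) (kuranishi br eta)"
  unfolding graded_multilin_def
proof (intro allI impI conjI ballI)
  fix ks vs assume "homog V ks vs \<and> 1 \<le> length vs"
  then have h: "homog V ks vs" by simp
  show "kuranishi br eta ks vs \<in> V (sum_list ks + (1 - int (length vs)))"
    by (rule kuranishi_deg[OF h])
  fix j x y assume j: "j < length vs"
  show "kuranishi br eta ks (vs[j := x + y]) = kuranishi br eta ks (vs[j := x]) + kuranishi br eta ks (vs[j := y])"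
  proof (cases "length vs = 2")
    case True
    hence "j = 0 \<or> j = 1" using j by auto
    thus ?thesis using True by (auto simp: kuranishi_def br_add_left br_add_right eta_add)
  qed (use j in \<open>auto simp: kuranishi_def\<close>)
next
  fix ks vs j c x assume a: "homog V ks vs \<and> 1 \<le> length vs" and j: "j < length vs"
  show "kuranishi br eta ks (vs[j := sc c x]) = sc c (kuranishi br eta ks (vs[j := x]))"
  proof (cases "length vs = 2")
    case True
    hence "j = 0 \<or> j = 1" using j by auto
    thus ?thesis using True by (auto simp: kuranishi_def br_sc_left br_sc_right eta_sc)
  qed (use j in \<open>auto simp: kuranishi_def sc_zero_right\<close>)
next
  fix ks vs j assume a: "homog V ks vs \<and> 1 \<le> length vs" and j: "Suc j < length vs"
  have lk: "length ks = length vs" using a by (simp add: homog_def)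
  have hv: "vs ! i \<in> V (ks ! i)" if "i < length vs" for i using a that by (simp add: homog_def)
  show "kuranishi br eta (swapadj ks j) (swapadj vs j) = - sc (of_int (ksign (ks ! j) (ks ! Suc j))) (kuranishi br eta ks vs)"
  proof (cases "length vs = 2")
    case True
    hence j0: "j = 0" using j by auto
    have "br (vs!1) (vs!0) = signed (1 + ks!0 * ks!1) (br (vs!0) (vs!1))"
      using br_swap[OF hv[of 1] hv[of 0]] True by (simp add: mult.commute)
    thus ?thesis using True j0 lk by (simp add: kuranishi_def minus_sc_ksign nth_swapadj eta_signed)
  qed (use j in \<open>auto simp: kuranishi_def sc_zero_right\<close>)
qed


lemma dab_graded_multilin: "graded_multilin sc V V (\<lambda>k. 2 - int k) (dab d)"
  unfolding graded_multilin_def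
proof (intro allI impI conjI ballI)
  fix ks vs assume a: "homog V ks vs \<and> 1 \<le> length vs"
  have lk: "length ks = length vs" using a by (simp add: homog_def)
  have hv: "vs ! i \<in> V (ks ! i)" if "i < length vs" for i using a that by (simp add: homog_def)
  show "dab d ks vs \<in> V (sum_list ks + (2 - int (length vs)))"
  proof (cases "length vs = 1")
    case True
    then obtain k0 where "ks = [k0]" using lk by (metis One_nat_def length_0_conv length_Suc_conv)
    thus ?thesis using True d_deg[OF hv[of 0]] by (simp add: dab_def add.commute)
  qed (simp add: dab_def)
  fix j x y assume j: "j < length vs"
  show "dab d ks (vs[j := x + y]) = dab d ks (vs[j := x]) + dab d ks (vs[j := y])"
    using j by (auto simp: dab_def d_add)
next
  fix ks vs j c x assume a: "homog V ks vs \<and> 1 \<le> length vs" and j: "j < length vs"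
  show "dab d ks (vs[j := sc c x]) = sc c (dab d ks (vs[j := x]))"
    using j by (auto simp: dab_def d_sc sc_zero_right)
next
  fix ks vs j assume a: "homog V ks vs \<and> 1 \<le> length vs" and j: "Suc j < length vs"
  show "dab d (swapadj ks j) (swapadj vs j) = - sc (of_int (ksign (ks ! j) (ks ! Suc j))) (dab d ks vs)"
    using j by (simp add: dab_def sc_zero_right)
qed

lemma Linf_algebra_dab: "Linf_algebra sc V (dab d)"
  unfolding Linf_algebra_def
  using graded dab_graded_multilin dab_linf_relation[OF vector_space_sc _ d_zero d_d] by (auto simp: homog_def)

lemma kuranishi_linf_term:
  assumes lv: "length vs = Suc N" and k: "k \<in> {1..N}" and S: "S \<in> k_subsets (Suc N) k"
  shows "linf_term (kuranishi br eta) Mu ks vs k S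
    = (if k = N then signed (unshuffle_exp ks S + int (k * (Suc N - k)))
         (eta (br (mu k (sublist_at ks S) (sublist_at vs S)) (sublist_at vs ({..<Suc N} - S) ! 0)))
       else 0)"
proof -
  have fS: "finite S" "card S = k" "S \<subseteq> {..<Suc N}"
    using S by (auto simp: k_subsets_def intro: finite_subset)
  have "length (sublist_at vs ({..<Suc N} - S)) = Suc N - k"
    using fS by (simp add: card_Diff_subset)
  then show ?thesis
    using fS k unfolding linf_term_def lv by (auto simp: kuranishi_def kur_mu_def)
qed

lemma kuranishi_morphism_eq:
  assumes h: "homog V ks vs" and n1: "1 \<le> length vs"
  shows "d (kuranishi br eta ks vs) = linf_sum sc (kuranishi br eta) Mu ks vs"
proof -
  obtain N where lv: "length vs = Suc N" using n1 by (cases "length vs") auto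
  have lk: "length ks = length vs" using h by (simp add: homog_def)
  have split: "linf_sum sc (kuranishi br eta) Mu ks vs
      = (\<Sum>k\<in>{1..N}. \<Sum>S\<in>k_subsets (Suc N) k. linf_term (kuranishi br eta) Mu ks vs k S) + mu (Suc N) ks vs"
    using sum_k_subsets_all_linf_term[OF lk, of "kuranishi br eta" Mu]
    by (simp add: linf_sum_eq_sum_k_subsets[OF vector_space_sc lk] lv kur_mu_def kuranishi_def)
  show ?thesis
  proof (cases "N = 0")
    case True
    then show ?thesis using split lv by (simp add: kuranishi_def)
  next
    case False
    have "(\<Sum>k\<in>{1..N}. \<Sum>S\<in>k_subsets (Suc N) k. linf_term (kuranishi br eta) Mu ks vs k S)
        = signed (int N) (eta_removal_sum (Suc N) ks vs)"
    proof -
      have "(\<Sum>k\<in>{1..N}. \<Sum>S\<in>k_subsets (Suc N) k. linf_term (kuranishi br eta) Mu ks vs k S)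
          = (\<Sum>k\<in>{1..N}. if k = N then \<Sum>S\<in>k_subsets (Suc N) N. signed (unshuffle_exp ks S + int (N * (Suc N - N)))
              (eta (br (mu N (sublist_at ks S) (sublist_at vs S)) (sublist_at vs ({..<Suc N} - S) ! 0))) else 0)"
        by (intro sum.cong refl) (simp add: kuranishi_linf_term[OF lv])
      then show ?thesis
        using False sum_k_subsets_pred_eta_br[OF h lv] by simp
    qed
    moreover have "mu (Suc N) ks vs = d_eta_bracket (Suc N) vs - signed (int N) (eta_removal_sum (Suc N) ks vs)"
      using kmu_decompose[of "Suc N"] False h lv by simp
    ultimately show ?thesis
      using split lv False by (simp add: d_eta_bracket_def kuranishi_def del: kmu.simps)
  qed
qed

end

theorem theorem3p2:
  fixes sc :: "'k::field_char_0 \<Rightarrow> 'v::ab_group_add \<Rightarrow> 'v"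
    and V :: "int \<Rightarrow> 'v set"
    and d eta :: "'v \<Rightarrow> 'v"
    and br :: "'v \<Rightarrow> 'v \<Rightarrow> 'v"
  assumes "DGLA sc V d br"
    and "graded_lin sc V (-1) eta"
  shows "Linf_iso_dab sc V (kur_mu sc d br eta) V d (kuranishi br eta)"
proof -
  interpret dgla_eta sc V d eta br using assms by unfold_locales
  have "Linf_morphism_dab sc V Mu V d (kuranishi br eta)"
    unfolding Linf_morphism_dab_def
    using Linf_algebra_Mu Linf_algebra_dab kuranishi_graded_multilin kuranishi_morphism_eq by blast
  moreover have "bij_betw (\<lambda>v. kuranishi br eta [i] [v]) (V i) (V i)" for i
    by (simp add: kuranishi_def bij_betw_id[unfolded id_def])
  ultimately show ?thesis
    unfolding Linf_iso_dab_def by blast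
qed

end
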